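(* Setting. Fix integers $N,M,J\ge 1$, a time $t$, and dimensions $n_x,n_u,n,l$. The agent's predicted states obey $x_{t|t}=x_t$ (given) and $x_{k+1|t}=A_kx_{k|t}+B_ku_{k|t}+E_kw_{k|t}$ for $k=t,\dots,t+N-1$, with $x\in\mathbb{R}^{n_x}$, $u\in\mathbb{R}^{n_u}$, $w\in\mathbb{R}^{n_x}$. For $i=1,\dots,M$ the $i$-th obstacle's predicted states obey $o^i_{t|t}=o^i_t$ (given) and $o^i_{k+1|t}=T^i_ko^i_{k|t}+q^i_k+F^i_kn^i_{k|t}$; write $o_{k|t},n_{k|t}$ for the stacked vectors over $i$ and $T_k,F_k$ (block diagonal), $q_k$ (stacked) for the combined obstacle dynamics. Nominal obstacle states are $\bar o_{t|t}=o_t$, $\bar o_{k+1|t}=T_k\bar o_{k|t}+q_k$, with components $\bar o^i_{k|t}$. The inputs are given by the policy $$u_{k|t}=h_{k|t}+\sum_{l=t}^{k-1}M_{l,k|t}w_{l|t}+K_{k|t}(o_{k|t}-\bar o_{k|t}),\quad k=t,\dots,t+N-1,$$ with parameters $\boldsymbol\theta_t=(\{h_{k|t}\},\{M_{l,k|t}\},\{K_{k|t}\})$. Let $\bar x_{t|t}=x_t$, $\bar x_{k+1|t}=A_k\bar x_{k|t}+B_kh_{k|t}$ be the nominal (noise-free) agent trajectory. Let $\mathbf{w}_t=[w_{t|t}^\top\cdots w_{t+N-1|t}^\top]^\top$, $\mathbf{n}_t=[n_{t|t}^\top\cdots n_{t+N-1|t}^\top]^\top$, $\mathbf{v}_t=[w_{t|t}^\top\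 n_{t|t}^\top\cdots w_{t+N-1|t}^\top\ n_{t+N-1|t}^\top]^\top$, and let $\mathbf{P}$ be the permutation matrix with $[\mathbf{w}_t^\top\ \mathbf{n}_t^\top]^\top=\mathbf{P}\mathbf{v}_t$. Geometry and constraints: $\mathcal{K}\subset\mathbb{R}^l$ is a closed convex cone with non-empty interior and dual cone $\mathcal{K}^*$; $G,G^i\in\mathbb{R}^{l\times n}$, $g,g^i\in\mathbb{R}^l$; $R_k,R^i_k$ are given rotation matrices; $C\in\mathbb{R}^{n\times n_x}$, $c_t\in\mathbb{R}^n$; $F^x_j\in\mathbb{R}^{1\times n_x}$, $F^u_j\in\mathbb{R}^{1\times n_u}$, $f_j\in\mathbb{R}$ for $j=1,\dots,J$. Dual variables are $\lambda^i_{k|t},\nu^i_{k|t}\in\mathbb{R}^l$ for $k=t+1,\dots,t+N$, $i=1,\dots,M$. Say that the constraints (CA) and (XU) hold if (CA) for all $k\in\{t+1,\dots,t+N\}$, $i\in\{1,\dots,M\}$: $\lambda^i_{k|t},\nu^i_{k|t}\in\mathcal{K}^*$, $\|\lambda^{i\top}_{k|t}GR_k^\top\|_2\le1$, $\lambda^{i\top}_{k|t}GR_k^\top=-\nu^{i\top}_{k|t}G^iR_k^{i\top}$, and $\lambda^{i\top}_{k|t}\big(GR_k^\top(C(x_{k|t}-o^i_{k|t})+c_t)+g\big)<-\nu^{i\top}_{k|t}g^i$; (XU) for all $k\in\{t,\dots,t+N-1\}$, $j\in\{1,\dots,J\}$: $F^x_jx_{k+1|t}+F^u_ju_{k|t}\le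 f_j$. Define, for $k\in\{t,\dots,t+N\}$, $i$, $j$: $Y^i_{k|t}=-\lambda^{i\top}_{k|t}g-\nu^{i\top}_{k|t}g^i-\lambda^{i\top}_{k|t}GR_k^\top c_t-\lambda^{i\top}_{k|t}GR_k^\top C(\bar x_{k|t}-\bar o^i_{k|t})$; $Z^i_{k|t}$ the row vector such that $\lambda^{i\top}_{k|t}GR_k^\top C(x_{k|t}-o^i_{k|t})=\lambda^{i\top}_{k|t}GR_k^\top C(\bar x_{k|t}-\bar o^i_{k|t})+Z^i_{k|t}[\mathbf{w}_t^\top\ \mathbf{n}_t^\top]^\top$ for all noise values; $\bar Y^j_{k|t}=f_j-F^x_j\bar x_{k+1|t}-F^u_jh_{k|t}$; $\bar Z^j_{k|t}$ the row vector such that $F^x_jx_{k+1|t}+F^u_ju_{k|t}=F^x_j\bar x_{k+1|t}+F^u_jh_{k|t}+\bar Z^j_{k|t}[\mathbf{w}_t^\top\ \mathbf{n}_t^\top]^\top$ for all noise values. (These are affine in $\boldsymbol\theta_t$ for fixed duals, bilinear jointly.) Conclusions. 1) Let $\Gamma$ be non-singular, $\gamma>0$, $\mathbf{\Gamma}=I_N\otimes\Gamma$. Then for given $(\boldsymbol\theta_t,\{\lambda^i_{k|t}\},\{\nu^i_{k|t}\})$, (CA) and (XU) hold for every $\mathbf{v}_t$ with $\|\mathbf{\Gamma}\mathbf{v}_t\|_\infty\le\gamma$ (i.e. each $[w_{k|t}^\top\ n_{k|t}^\top]^\top\in\{d\mid\|\Gamma d\|_\infty\le\gamma\}$) if and only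 if for all $k\in\{t,\dots,t+N-1\}$, $i$, $j$: $\lambda^i_{k+1|t},\nu^i_{k+1|t}\in\mathcal{K}^*$, $\|\lambda^{i\top}_{k+1|t}GR_{k+1}^\top\|_2\le1$, $\lambda^{i\top}_{k+1|t}GR_{k+1}^\top=-\nu^{i\top}_{k+1|t}G^iR^{i\top}_{k+1}$, $Y^i_{k+1|t}>\gamma\|Z^i_{k+1|t}\mathbf{P}\mathbf{\Gamma}^{-1}\|_1$, and $\bar Y^j_{k|t}-\gamma\|\bar Z^j_{k|t}\mathbf{P}\mathbf{\Gamma}^{-1}\|_1\ge0$. 2) Let $\Sigma$ be a covariance matrix, $\mathbf{\Sigma}=I_N\otimes\Sigma$, $\epsilon\in(0,1)$, and suppose $\mathbf{v}_t\sim\mathcal{N}(0,\mathbf{\Sigma})$ (i.e. the $[w_{k|t}^\top\ n_{k|t}^\top]^\top$ are i.i.d. $\mathcal{N}(0,\Sigma)$). Set $\gamma_{ca}=\Phi^{-1}(1-\frac{\epsilon}{2NM})$, $\gamma_{xu}=\Phi^{-1}(1-\frac{\epsilon}{2NJ})$, where $\Phi^{-1}$ is the quantile function of the standard normal distribution. If for all $k\in\{t,\dots,t+N-1\}$, $i$, $j$: $\lambda^i_{k+1|t},\nu^i_{k+1|t}\in\mathcal{K}^*$, $\|\lambda^{i\top}_{k+1|t}GR_{k+1}^\top\|_2\le1$, $\lambda^{i\top}_{k+1|t}GR_{k+1}^\top=-\nu^{i\top}_{k+1|t}G^iR^{i\top}_{k+1}$, $Y^i_{k+1|t}>\gamma_{ca}\|Z^i_{k+1|t}\mathbf{P}\mathbf{\Sigma}^{1/2}\|_2$,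 and $\bar Y^j_{k|t}\ge\gamma_{xu}\|\bar Z^j_{k|t}\mathbf{P}\mathbf{\Sigma}^{1/2}\|_2$, then the probability that (CA) and (XU) both hold is at least $1-\epsilon$. 3) With $\mathbf{\Sigma}$, $\epsilon$ as in 2) but with $\gamma_{ca}=\sqrt{\frac{2NM-\epsilon}{\epsilon}}$, $\gamma_{xu}=\sqrt{\frac{2NJ-\epsilon}{\epsilon}}$: if the same conditions as in 2) hold, then for every probability distribution of $\mathbf{v}_t$ with $\mathbb{E}(\mathbf{v}_t)=0$ and $\mathbb{E}(\mathbf{v}_t\mathbf{v}_t^\top)=\mathbf{\Sigma}$, the probability that (CA) and (XU) both hold is at least $1-\epsilon$.
   Context: $\mathcal{K}^*=\{y\mid y^\top x\ge0\ \forall x\in\mathcal{K}\}$. $\mathbf{\Sigma}^{1/2}$ denotes the symmetric positive semidefinite square root. $\otimes$ is the Kronecker product. Here $\lambda^i_{k|t},\nu^i_{k|t}$ and the policy parameters are deterministic decision variables (not depending on the noise), while $x_{k|t},u_{k|t},o_{k|t}$ are the closed-loop predicted quantities, which are affine functions of the noise vector $\mathbf{v}_t$. In the paper, the sets described in parts 1), 2)–3) are called $\mathcal{F}_t(\mathbf{D1})$, $\mathcal{F}_t(\mathbf{D2})$, $\mathcal{F}_t(\mathbf{D3})$ (the latter two being inner-approximations of the chance-constrained feasible sets). *)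

theory Defs
  imports "HOL-Analysis.Analysis" "HOL-Probability.Probability"
begin

text \<open>Index types: 'x = state dimension n_x, 'u = input dimension n_u, 'n = output
dimension n (of C), 'l = cone dimension l, 'm = obstacle index set (M = CARD('m)),
'e = dimension of the noise n^i of a single obstacle.  The per-step noise vector
[w_k; n_k] lives in real^('x + 'm * 'e): the Inl-part is w_k, the Inr (i,_) part is n^i_k.\<close>

record ('x::finite, 'u::finite, 'm::finite, 'e::finite) dyn =
  dA  :: "nat \<Rightarrow> real^'x^'x"
  dB  :: "nat \<Rightarrow> real^'u^'x"
  dE  :: "nat \<Rightarrow> real^'x^'x"
  dT  :: "'m \<Rightarrow> nat \<Rightarrow> real^'x^'x"
  dq  :: "'m \<Rightarrow> nat \<Rightarrow> real^'x"
  dF  :: "'m \<Rightarrow> nat \<Rightarrow> real^'e^'x"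
  dx0 :: "real^'x"
  do0 :: "'m \<Rightarrow> real^'x"

text \<open>Policy parameters theta_t = ({h_k}, {M_{l,k}}, {K_k}).  K_k acts on the stacked
obstacle deviation, indexed by 'm * 'x.\<close>
record ('x::finite, 'u::finite, 'm::finite) policy =
  ph :: "nat \<Rightarrow> real^'u"
  pM :: "nat \<Rightarrow> nat \<Rightarrow> real^'x^'u"
  pK :: "nat \<Rightarrow> real^('m \<times> 'x)^'u"

record ('x::finite, 'n::finite, 'l::finite, 'm::finite) geo =
  gK  :: "(real^'l) set"
  gG  :: "real^'n^'l"
  gg  :: "real^'l"
  gGi :: "'m \<Rightarrow> real^'n^'l"
  ggi :: "'m \<Rightarrow> real^'l"
  gR  :: "nat \<Rightarrow> real^'n^'n"
  gRi :: "'m \<Rightarrow> nat \<Rightarrow> real^'n^'n"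
  gC  :: "real^'x^'n"
  gc  :: "real^'n"

definition dual_cone :: "'a::real_inner set \<Rightarrow> 'a set" where
  "dual_cone K = {y. \<forall>x\<in>K. 0 \<le> y \<bullet> x}"

definition wpart :: "real^('x::finite + ('m::finite \<times> 'e::finite)) \<Rightarrow> real^'x" where
  "wpart d = (\<chi> a. d $ Inl a)"

definition npart :: "real^('x::finite + ('m::finite \<times> 'e::finite)) \<Rightarrow> 'm \<Rightarrow> real^'e" where
  "npart d i = (\<chi> b. d $ Inr (i, b))"

section \<open>Predicted trajectories (relative index j = k - t)\<close>

fun obar_rel :: "('x::finite,'u::finite,'m::finite,'e::finite) dyn \<Rightarrow> nat \<Rightarrow> nat \<Rightarrow> 'm \<Rightarrow> real^'x" where
  "obar_rel S t 0 i = do0 S i"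
| "obar_rel S t (Suc j) i = dT S i (t+j) *v obar_rel S t j i + dq S i (t+j)"

definition obar :: "('x::finite,'u::finite,'m::finite,'e::finite) dyn \<Rightarrow> nat \<Rightarrow> nat \<Rightarrow> 'm \<Rightarrow> real^'x" where
  "obar S t k i = obar_rel S t (k - t) i"

fun o_rel :: "('x::finite,'u::finite,'m::finite,'e::finite) dyn \<Rightarrow> nat
    \<Rightarrow> (nat \<Rightarrow> real^('x + 'm \<times> 'e)) \<Rightarrow> nat \<Rightarrow> 'm \<Rightarrow> real^'x" where
  "o_rel S t V 0 i = do0 S i"
| "o_rel S t V (Suc j) i = dT S i (t+j) *v o_rel S t V j i + dq S i (t+j)
      + dF S i (t+j) *v npart (V (t+j)) i"

definition ostate :: "('x::finite,'u::finite,'m::finite,'e::finite) dyn \<Rightarrow> nat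
    \<Rightarrow> (nat \<Rightarrow> real^('x + 'm \<times> 'e)) \<Rightarrow> nat \<Rightarrow> 'm \<Rightarrow> real^'x" where
  "ostate S t V k i = o_rel S t V (k - t) i"

definition ctrl :: "('x::finite,'u::finite,'m::finite,'e::finite) dyn \<Rightarrow> ('x,'u,'m) policy \<Rightarrow> nat
    \<Rightarrow> (nat \<Rightarrow> real^('x + 'm \<times> 'e)) \<Rightarrow> nat \<Rightarrow> real^'u" where
  "ctrl S P t V k = ph P k + (\<Sum>l\<in>{t..<k}. pM P l k *v wpart (V l))
      + pK P k *v (\<chi> p. (ostate S t V k (fst p) - obar S t k (fst p)) $ snd p)"

fun x_rel :: "('x::finite,'u::finite,'m::finite,'e::finite) dyn \<Rightarrow> ('x,'u,'m) policy \<Rightarrow> nat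
    \<Rightarrow> (nat \<Rightarrow> real^('x + 'm \<times> 'e)) \<Rightarrow> nat \<Rightarrow> real^'x" where
  "x_rel S P t V 0 = dx0 S"
| "x_rel S P t V (Suc j) = dA S (t+j) *v x_rel S P t V j + dB S (t+j) *v ctrl S P t V (t+j)
      + dE S (t+j) *v wpart (V (t+j))"

definition xstate :: "('x::finite,'u::finite,'m::finite,'e::finite) dyn \<Rightarrow> ('x,'u,'m) policy \<Rightarrow> nat
    \<Rightarrow> (nat \<Rightarrow> real^('x + 'm \<times> 'e)) \<Rightarrow> nat \<Rightarrow> real^'x" where
  "xstate S P t V k = x_rel S P t V (k - t)"

fun xbar_rel :: "('x::finite,'u::finite,'m::finite,'e::finite) dyn \<Rightarrow> ('x,'u,'m) policy \<Rightarrow> nat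
    \<Rightarrow> nat \<Rightarrow> real^'x" where
  "xbar_rel S P t 0 = dx0 S"
| "xbar_rel S P t (Suc j) = dA S (t+j) *v xbar_rel S P t j + dB S (t+j) *v ph P (t+j)"

definition xbar :: "('x::finite,'u::finite,'m::finite,'e::finite) dyn \<Rightarrow> ('x,'u,'m) policy \<Rightarrow> nat
    \<Rightarrow> nat \<Rightarrow> real^'x" where
  "xbar S P t k = xbar_rel S P t (k - t)"

definition lGR :: "('x::finite,'n::finite,'l::finite,'m::finite) geo \<Rightarrow> ('m \<Rightarrow> nat \<Rightarrow> real^'l)
    \<Rightarrow> 'm \<Rightarrow> nat \<Rightarrow> real^'n" where
  "lGR Gm lam i k = lam i k v* (gG Gm ** transpose (gR Gm k))"

definition nGR :: "('x::finite,'n::finite,'l::finite,'m::finite) geo \<Rightarrow> ('m \<Rightarrow> nat \<Rightarrow> real^'l)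
    \<Rightarrow> 'm \<Rightarrow> nat \<Rightarrow> real^'n" where
  "nGR Gm nu i k = nu i k v* (gGi Gm i ** transpose (gRi Gm i k))"

definition dual_feas :: "('x::finite,'n::finite,'l::finite,'m::finite) geo \<Rightarrow> ('m \<Rightarrow> nat \<Rightarrow> real^'l)
    \<Rightarrow> ('m \<Rightarrow> nat \<Rightarrow> real^'l) \<Rightarrow> 'm \<Rightarrow> nat \<Rightarrow> bool" where
  "dual_feas Gm lam nu i k \<longleftrightarrow>
     lam i k \<in> dual_cone (gK Gm) \<and> nu i k \<in> dual_cone (gK Gm) \<and>
     norm (lGR Gm lam i k) \<le> 1 \<and> lGR Gm lam i k = - nGR Gm nu i k"

definition CA :: "('x::finite,'u::finite,'m::finite,'e::finite) dyn \<Rightarrow> ('x,'u,'m) policy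
    \<Rightarrow> ('x,'n::finite,'l::finite,'m) geo \<Rightarrow> nat \<Rightarrow> nat
    \<Rightarrow> ('m \<Rightarrow> nat \<Rightarrow> real^'l) \<Rightarrow> ('m \<Rightarrow> nat \<Rightarrow> real^'l)
    \<Rightarrow> (nat \<Rightarrow> real^('x + 'm \<times> 'e)) \<Rightarrow> bool" where
  "CA S P Gm t N lam nu V \<longleftrightarrow>
     (\<forall>k\<in>{t+1..t+N}. \<forall>i. dual_feas Gm lam nu i k \<and>
        lam i k \<bullet> ((gG Gm ** transpose (gR Gm k)) *v
            (gC Gm *v (xstate S P t V k - ostate S t V k i) + gc Gm) + gg Gm)
        < - (nu i k \<bullet> ggi Gm i))"

definition XU :: "('x::finite,'u::finite,'m::finite,'e::finite) dyn \<Rightarrow> ('x,'u,'m) policy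
    \<Rightarrow> (nat \<Rightarrow> real^'x) \<Rightarrow> (nat \<Rightarrow> real^'u) \<Rightarrow> (nat \<Rightarrow> real) \<Rightarrow> nat \<Rightarrow> nat \<Rightarrow> nat
    \<Rightarrow> (nat \<Rightarrow> real^('x + 'm \<times> 'e)) \<Rightarrow> bool" where
  "XU S P Fx Fu f J t N V \<longleftrightarrow>
     (\<forall>k\<in>{t..<t+N}. \<forall>j\<in>{1..J}.
        Fx j \<bullet> xstate S P t V (Suc k) + Fu j \<bullet> ctrl S P t V k \<le> f j)"

definition Yca :: "('x::finite,'u::finite,'m::finite,'e::finite) dyn \<Rightarrow> ('x,'u,'m) policy
    \<Rightarrow> ('x,'n::finite,'l::finite,'m) geo \<Rightarrow> nat
    \<Rightarrow> ('m \<Rightarrow> nat \<Rightarrow> real^'l) \<Rightarrow> ('m \<Rightarrow> nat \<Rightarrow> real^'l) \<Rightarrow> 'm \<Rightarrow> nat \<Rightarrow> real" where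
  "Yca S P Gm t lam nu i k =
     - (lam i k \<bullet> gg Gm) - (nu i k \<bullet> ggi Gm i)
     - lam i k \<bullet> ((gG Gm ** transpose (gR Gm k)) *v gc Gm)
     - lam i k \<bullet> ((gG Gm ** transpose (gR Gm k)) *v (gC Gm *v (xbar S P t k - obar S t k i)))"

text \<open>\<open>Z^i_{k|t} P\<close>, represented blockwise: the family z with z l = the block of the row
vector \<open>Z^i_{k|t} P\<close> acting on \<open>[w_{l|t}; n_{l|t}]\<close>, l = t..t+N-1 (and z l = 0 outside the
horizon), uniquely determined by the defining identity for all noise values.\<close>
definition Zca :: "('x::finite,'u::finite,'m::finite,'e::finite) dyn \<Rightarrow> ('x,'u,'m) policy
    \<Rightarrow> ('x,'n::finite,'l::finite,'m) geo \<Rightarrow> nat \<Rightarrow> nat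
    \<Rightarrow> ('m \<Rightarrow> nat \<Rightarrow> real^'l) \<Rightarrow> 'm \<Rightarrow> nat \<Rightarrow> (nat \<Rightarrow> real^('x + 'm \<times> 'e))" where
  "Zca S P Gm t N lam i k = (THE z. (\<forall>l. l \<notin> {t..<t+N} \<longrightarrow> z l = 0) \<and>
     (\<forall>V. lam i k \<bullet> ((gG Gm ** transpose (gR Gm k)) *v (gC Gm *v (xstate S P t V k - ostate S t V k i)))
        = lam i k \<bullet> ((gG Gm ** transpose (gR Gm k)) *v (gC Gm *v (xbar S P t k - obar S t k i)))
          + (\<Sum>l\<in>{t..<t+N}. z l \<bullet> V l)))"

definition Yxu :: "('x::finite,'u::finite,'m::finite,'e::finite) dyn \<Rightarrow> ('x,'u,'m) policy
    \<Rightarrow> (nat \<Rightarrow> real^'x) \<Rightarrow> (nat \<Rightarrow> real^'u) \<Rightarrow> (nat \<Rightarrow> real) \<Rightarrow> nat \<Rightarrow> nat \<Rightarrow> nat \<Rightarrow> real" where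
  "Yxu S P Fx Fu f t j k = f j - Fx j \<bullet> xbar S P t (Suc k) - Fu j \<bullet> ph P k"

text \<open>\<open>Zbar^j_{k|t} P\<close>, blockwise as for Zca.\<close>
definition Zxu :: "('x::finite,'u::finite,'m::finite,'e::finite) dyn \<Rightarrow> ('x,'u,'m) policy
    \<Rightarrow> (nat \<Rightarrow> real^'x) \<Rightarrow> (nat \<Rightarrow> real^'u) \<Rightarrow> nat \<Rightarrow> nat \<Rightarrow> nat \<Rightarrow> nat
    \<Rightarrow> (nat \<Rightarrow> real^('x + 'm \<times> 'e))" where
  "Zxu S P Fx Fu t N j k = (THE z. (\<forall>l. l \<notin> {t..<t+N} \<longrightarrow> z l = 0) \<and>
     (\<forall>V. Fx j \<bullet> xstate S P t V (Suc k) + Fu j \<bullet> ctrl S P t V k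
        = Fx j \<bullet> xbar S P t (Suc k) + Fu j \<bullet> ph P k + (\<Sum>l\<in>{t..<t+N}. z l \<bullet> V l)))"

text \<open>\<open>\<parallel>(ZP) (I_N \<otimes> \<Gamma>)^{-1}\<parallel>_1\<close> for ZP given blockwise by z (using (I_N \<otimes> \<Gamma>)^{-1} = I_N \<otimes> \<Gamma>^{-1}).\<close>
definition norm1_kron_inv :: "real^'d^'d \<Rightarrow> nat \<Rightarrow> nat \<Rightarrow> (nat \<Rightarrow> real^'d::finite) \<Rightarrow> real" where
  "norm1_kron_inv Gam t N z = (\<Sum>l\<in>{t..<t+N}. \<Sum>a\<in>UNIV. \<bar>(z l v* matrix_inv Gam) $ a\<bar>)"

definition psd :: "real^'d^'d::finite \<Rightarrow> bool" where
  "psd S \<longleftrightarrow> transpose S = S \<and> (\<forall>x. 0 \<le> x \<bullet> (S *v x))"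

definition psd_sqrt :: "real^'d^'d::finite \<Rightarrow> real^'d^'d" where
  "psd_sqrt S = (THE R. psd R \<and> R ** R = S)"

text \<open>\<open>\<parallel>(ZP) (I_N \<otimes> \<Sigma>)^{1/2}\<parallel>_2\<close> for ZP given blockwise by z (using (I_N \<otimes> \<Sigma>)^{1/2} = I_N \<otimes> \<Sigma>^{1/2}).\<close>
definition norm2_kron_sqrt :: "real^'d^'d \<Rightarrow> nat \<Rightarrow> nat \<Rightarrow> (nat \<Rightarrow> real^'d::finite) \<Rightarrow> real" where
  "norm2_kron_sqrt Sig t N z = sqrt (\<Sum>l\<in>{t..<t+N}. (norm (z l v* psd_sqrt Sig))\<^sup>2)"

definition std_normal_cdf :: "real \<Rightarrow> real" where
  "std_normal_cdf = cdf (density lborel std_normal_density)"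

definition std_normal_quantile :: "real \<Rightarrow> real" where
  "std_normal_quantile p = (THE x. std_normal_cdf x = p)"

definition centered_gaussian_rv :: "'w measure \<Rightarrow> ('w \<Rightarrow> real) \<Rightarrow> real \<Rightarrow> bool" where
  "centered_gaussian_rv Pm X s2 \<longleftrightarrow>
     (s2 = 0 \<and> X \<in> borel_measurable Pm \<and> (AE w in Pm. X w = 0)) \<or>
     (0 < s2 \<and> distributed Pm lborel X (normal_density 0 (sqrt s2)))"

text \<open>The stacked noise vector (V w l)_{l = t..t+N-1} is multivariate Gaussian N(0, I_N \<otimes> \<Sigma>),
i.e. every linear functional of it is centered Gaussian with the corresponding variance.\<close>
definition stacked_gaussian :: "'w measure \<Rightarrow> ('w \<Rightarrow> nat \<Rightarrow> real^'d::finite) \<Rightarrow> nat \<Rightarrow> nat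
    \<Rightarrow> real^'d^'d \<Rightarrow> bool" where
  "stacked_gaussian Pm V t N Sig \<longleftrightarrow>
     (\<forall>l\<in>{t..<t+N}. (\<lambda>w. V w l) \<in> borel_measurable Pm) \<and>
     (\<forall>c :: nat \<Rightarrow> real^'d. centered_gaussian_rv Pm (\<lambda>w. \<Sum>l\<in>{t..<t+N}. c l \<bullet> V w l)
          (\<Sum>l\<in>{t..<t+N}. c l \<bullet> (Sig *v c l)))"

text \<open>E(v) = 0 and E(v v^T) = I_N \<otimes> \<Sigma> for the stacked noise vector.\<close>
definition stacked_moments :: "'w measure \<Rightarrow> ('w \<Rightarrow> nat \<Rightarrow> real^'d::finite) \<Rightarrow> nat \<Rightarrow> nat
    \<Rightarrow> real^'d^'d \<Rightarrow> bool" where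
  "stacked_moments Pm V t N Sig \<longleftrightarrow>
     (\<forall>l\<in>{t..<t+N}. (\<lambda>w. V w l) \<in> borel_measurable Pm) \<and>
     (\<forall>l\<in>{t..<t+N}. \<forall>a. integrable Pm (\<lambda>w. V w l $ a) \<and> (\<integral>w. V w l $ a \<partial>Pm) = 0) \<and>
     (\<forall>l\<in>{t..<t+N}. \<forall>l'\<in>{t..<t+N}. \<forall>a b.
        integrable Pm (\<lambda>w. V w l $ a * V w l' $ b) \<and>
        (\<integral>w. V w l $ a * V w l' $ b \<partial>Pm) = (if l = l' then Sig $ a $ b else 0))"

end

(* Along the prediction horizon the deviations of the states, the obstacle states and the inputs
   from their nominal values are linear in the noise blocks, so every constraint of (CA) and (XU)
   reads  Z v < Y  resp.  Z v <= Y  with the unique coefficient rows Z of Zca and Zxu, while dual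
   feasibility does not involve the noise.
   Over the box  |Gamma v_l|_inf <= gamma  the maximum of  Z v  is  gamma |Z Gamma^-1|_1, attained
   at a sign vector; this is part 1.
   For random noise,  Z v  is a centred scalar with variance  Z Sigma Z^T = |Z Sigma^(1/2)|_2^2.
   Each of the NM collision constraints is then violated with probability at most  eps/(2NM),
   and each of the NJ state-input constraints with probability at most  eps/(2NJ): by the normal
   quantile for Gaussian noise, and by Cantelli's one-sided Chebyshev inequality when only the
   first two moments are known.  A union bound over all constraints gives parts 2 and 3. *)

theory Submission
  imports Defs
begin

section \<open>Affine dependence on the noise\<close>

lemma linear_wpart: "linear (wpart :: real^('x::finite + 'm::finite \<times> 'e::finite) \<Rightarrow> real^'x)"
  by (auto simp: linear_iff wpart_def vec_eq_iff)

lemma linear_npart: "linear (\<lambda>v::real^('x::finite + 'm::finite \<times> 'e::finite). npart v i)"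
  by (auto simp: linear_iff npart_def vec_eq_iff)

definition noise_linear :: "nat set \<Rightarrow> ((nat \<Rightarrow> real^'d::finite) \<Rightarrow> real^'n::finite) \<Rightarrow> bool" where
  "noise_linear I F \<longleftrightarrow> (\<exists>Z::nat \<Rightarrow> real^'d^'n. \<forall>V. F V = (\<Sum>l\<in>I. Z l *v V l))"

lemma noise_linear_zero: "noise_linear I (\<lambda>V. 0)"
  unfolding noise_linear_def by (rule exI[of _ "\<lambda>l. 0"]) simp

lemma noise_linear_add:
  assumes "noise_linear I F" "noise_linear I G"
  shows "noise_linear I (\<lambda>V. F V + G V)"
proof -
  obtain Z Z' where "\<And>V. F V = (\<Sum>l\<in>I. Z l *v V l)" "\<And>V. G V = (\<Sum>l\<in>I. Z' l *v V l)"
    using assms unfolding noise_linear_def by blast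
  then show ?thesis
    unfolding noise_linear_def
    by (intro exI[of _ "\<lambda>l. Z l + Z' l"]) (simp add: matrix_vector_mult_add_rdistrib sum.distrib)
qed

lemma noise_linear_compose:
  assumes f: "linear f" and F: "noise_linear I F"
  shows "noise_linear I (\<lambda>V. f (F V))"
proof -
  obtain Z where "\<And>V. F V = (\<Sum>l\<in>I. Z l *v V l)"
    using F unfolding noise_linear_def by blast
  then show ?thesis
    unfolding noise_linear_def
    by (intro exI[of _ "\<lambda>l. matrix f ** Z l"])
       (simp add: linear_sum[OF f] matrix_works[OF linear_matrix_vector_mul_eq[THEN iffD2, OF f]]
          matrix_vector_mul_assoc[symmetric])
qed

lemma noise_linear_diff:
  assumes "noise_linear I F" "noise_linear I G"
  shows "noise_linear I (\<lambda>V. F V - G V)"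
  using noise_linear_add[OF assms(1) noise_linear_compose[OF linear_uminus assms(2)]] by simp

lemma noise_linear_sum:
  "finite K \<Longrightarrow> (\<And>k. k \<in> K \<Longrightarrow> noise_linear I (F k)) \<Longrightarrow> noise_linear I (\<lambda>V. \<Sum>k\<in>K. F k V)"
  by (induction K rule: finite_induct) (simp_all add: noise_linear_zero noise_linear_add)

lemma noise_linear_block:
  assumes "finite I" "l0 \<in> I"
  shows "noise_linear I (\<lambda>V. V l0)"
  unfolding noise_linear_def
proof (intro exI allI)
  fix V :: "nat \<Rightarrow> real^'d"
  have "(\<Sum>l\<in>I. (if l = l0 then mat 1 else 0) *v V l) = (\<Sum>l\<in>I. if l = l0 then V l else 0)"
    by (rule sum.cong) auto
  then show "V l0 = (\<Sum>l\<in>I. (if l = l0 then mat 1 else 0) *v V l)"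
    using assms by simp
qed

lemma noise_linear_stack:
  assumes "\<And>i. noise_linear I (F i)"
  shows "noise_linear I (\<lambda>V. \<chi> p. F (fst p) V $ snd p)"
proof -
  have "\<forall>i. \<exists>Z. \<forall>V. F i V = (\<Sum>l\<in>I. Z l *v V l)"
    using assms unfolding noise_linear_def by blast
  from choice[OF this] obtain Z where Z: "\<forall>i V. F i V = (\<Sum>l\<in>I. Z i l *v V l)"
    by blast
  show ?thesis
    unfolding noise_linear_def
    by (intro exI[of _ "\<lambda>l. \<chi> p. Z (fst p) l $ snd p"])
       (simp add: Z vec_eq_iff matrix_vector_mul_component)
qed

lemma noise_linear_inner:
  assumes "noise_linear I F"
  shows "\<exists>z. (\<forall>l. l \<notin> I \<longrightarrow> z l = 0) \<and> (\<forall>V. y \<bullet> F V = (\<Sum>l\<in>I. z l \<bullet> V l))"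
proof -
  obtain Z where "\<And>V. F V = (\<Sum>l\<in>I. Z l *v V l)"
    using assms unfolding noise_linear_def by blast
  then show ?thesis
    by (intro exI[of _ "\<lambda>l. if l \<in> I then y v* Z l else 0"])
       (simp add: inner_sum_right dot_lmul_matrix)
qed

lemma noise_coefficients_unique:
  fixes z z' :: "nat \<Rightarrow> real^'d::finite"
  assumes "finite I" "\<forall>l. l \<notin> I \<longrightarrow> z l = 0" "\<forall>l. l \<notin> I \<longrightarrow> z' l = 0"
    and same: "\<And>V. (\<Sum>l\<in>I. z l \<bullet> V l) = (\<Sum>l\<in>I. z' l \<bullet> V l)"
  shows "z = z'"
proof
  fix l0
  show "z l0 = z' l0"
  proof (cases "l0 \<in> I")
    case True
    define V where "V l = (if l = l0 then z l0 - z' l0 else 0)" for l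
    have "0 = (\<Sum>l\<in>I. (z l - z' l) \<bullet> V l)"
      using same[of V] by (simp add: inner_diff_left sum_subtractf)
    also have "\<dots> = (z l0 - z' l0) \<bullet> (z l0 - z' l0)"
      using True assms(1) by (simp add: V_def if_distrib sum.delta cong: if_cong)
    finally show ?thesis by simp
  next
    case False
    then show ?thesis using assms(2,3) by simp
  qed
qed

lemma the_noise_coefficients:
  fixes G :: "(nat \<Rightarrow> real^'d::finite) \<Rightarrow> real"
  assumes "finite I" and ex: "\<exists>z. (\<forall>l. l \<notin> I \<longrightarrow> z l = 0) \<and> (\<forall>V. G V = c + (\<Sum>l\<in>I. z l \<bullet> V l))"
  shows "G V = c + (\<Sum>l\<in>I.
    (THE z. (\<forall>l. l \<notin> I \<longrightarrow> z l = 0) \<and> (\<forall>V. G V = c + (\<Sum>l\<in>I. z l \<bullet> V l))) l \<bullet> V l)"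
proof -
  have "\<exists>!z. (\<forall>l. l \<notin> I \<longrightarrow> z l = 0) \<and> (\<forall>V. G V = c + (\<Sum>l\<in>I. z l \<bullet> V l))"
  proof (rule ex_ex1I[OF ex])
    fix z z'
    assume "(\<forall>l. l \<notin> I \<longrightarrow> z l = 0) \<and> (\<forall>V. G V = c + (\<Sum>l\<in>I. z l \<bullet> V l))"
      and "(\<forall>l. l \<notin> I \<longrightarrow> z' l = 0) \<and> (\<forall>V. G V = c + (\<Sum>l\<in>I. z' l \<bullet> V l))"
    then show "z = z'"
      by (intro noise_coefficients_unique[OF assms(1)]) auto
  qed
  from theI'[OF this] show ?thesis by blast
qed

lemma obstacle_deviation_linear:
  "j \<le> N \<Longrightarrow> noise_linear {t..<t+N} (\<lambda>V. o_rel S t V j i - obar_rel S t j i)"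
proof (induction j)
  case 0
  then show ?case by (simp add: noise_linear_zero)
next
  case (Suc j)
  have IH: "noise_linear {t..<t+N} (\<lambda>V. o_rel S t V j i - obar_rel S t j i)"
    using Suc by simp
  have eq: "o_rel S t V (Suc j) i - obar_rel S t (Suc j) i =
      dT S i (t+j) *v (o_rel S t V j i - obar_rel S t j i) + dF S i (t+j) *v npart (V (t+j)) i" for V
    by (simp add: matrix_vector_mult_diff_distrib)
  have "noise_linear {t..<t+N} (\<lambda>V. dT S i (t+j) *v (o_rel S t V j i - obar_rel S t j i)
      + dF S i (t+j) *v npart (V (t+j)) i)"
    using Suc.prems
    by (intro noise_linear_add noise_linear_compose[OF matrix_vector_mul_linear]
        noise_linear_compose[OF linear_npart] noise_linear_block IH) auto
  then show ?case by (simp only: eq)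
qed

lemma control_deviation_linear:
  assumes "j \<le> N"
  shows "noise_linear {t..<t+N} (\<lambda>V. ctrl S P t V (t+j) - ph P (t+j))"
proof -
  have "noise_linear {t..<t+N} (\<lambda>V. (\<Sum>l\<in>{t..<t+j}. pM P l (t+j) *v wpart (V l))
      + pK P (t+j) *v (\<chi> p. (o_rel S t V j (fst p) - obar_rel S t j (fst p)) $ snd p))"
    using assms
    by (intro noise_linear_add noise_linear_sum noise_linear_compose[OF matrix_vector_mul_linear]
        noise_linear_compose[OF linear_wpart] noise_linear_block noise_linear_stack
        obstacle_deviation_linear) auto
  then show ?thesis
    by (simp add: ctrl_def ostate_def obar_def)
qed

lemma state_deviation_linear:
  "j \<le> N \<Longrightarrow> noise_linear {t..<t+N} (\<lambda>V. x_rel S P t V j - xbar_rel S P t j)"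
proof (induction j)
  case 0
  then show ?case by (simp add: noise_linear_zero)
next
  case (Suc j)
  have IH: "noise_linear {t..<t+N} (\<lambda>V. x_rel S P t V j - xbar_rel S P t j)"
    using Suc by simp
  have eq: "x_rel S P t V (Suc j) - xbar_rel S P t (Suc j) =
      dA S (t+j) *v (x_rel S P t V j - xbar_rel S P t j)
      + dB S (t+j) *v (ctrl S P t V (t+j) - ph P (t+j)) + dE S (t+j) *v wpart (V (t+j))" for V
    by (simp add: matrix_vector_mult_diff_distrib algebra_simps)
  have "noise_linear {t..<t+N} (\<lambda>V. dA S (t+j) *v (x_rel S P t V j - xbar_rel S P t j)
      + dB S (t+j) *v (ctrl S P t V (t+j) - ph P (t+j)) + dE S (t+j) *v wpart (V (t+j)))"
    using Suc.prems
    by (intro noise_linear_add noise_linear_compose[OF matrix_vector_mul_linear]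
        noise_linear_compose[OF linear_wpart] noise_linear_block control_deviation_linear IH) auto
  then show ?case by (simp only: eq)
qed

lemma Zca_represents:
  assumes "t \<le> k" "k \<le> t + N"
  shows "lam i k \<bullet> ((gG Gm ** transpose (gR Gm k)) *v (gC Gm *v (xstate S P t V k - ostate S t V k i)))
    = lam i k \<bullet> ((gG Gm ** transpose (gR Gm k)) *v (gC Gm *v (xbar S P t k - obar S t k i)))
      + (\<Sum>l\<in>{t..<t+N}. Zca S P Gm t N lam i k l \<bullet> V l)"
proof -
  define A where "A = gG Gm ** transpose (gR Gm k)"
  define dev where
    "dev V = (x_rel S P t V (k-t) - xbar_rel S P t (k-t)) - (o_rel S t V (k-t) i - obar_rel S t (k-t) i)"
    for V
  have "xstate S P t V k - ostate S t V k i = (xbar S P t k - obar S t k i) + dev V" for V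
    unfolding dev_def xstate_def ostate_def xbar_def obar_def by (simp add: algebra_simps)
  then have split: "A *v (gC Gm *v (xstate S P t V k - ostate S t V k i))
      = A *v (gC Gm *v (xbar S P t k - obar S t k i)) + A *v (gC Gm *v dev V)" for V
    by (simp only: matrix_vector_right_distrib)
  have "noise_linear {t..<t+N} (\<lambda>V. A *v (gC Gm *v dev V))"
    unfolding dev_def using assms
    by (intro noise_linear_compose[OF matrix_vector_mul_linear] noise_linear_diff
        state_deviation_linear obstacle_deviation_linear) auto
  from noise_linear_inner[OF this, of "lam i k"]
  have "\<exists>z. (\<forall>l. l \<notin> {t..<t+N} \<longrightarrow> z l = 0) \<and>
      (\<forall>V. lam i k \<bullet> (A *v (gC Gm *v (xstate S P t V k - ostate S t V k i)))
        = lam i k \<bullet> (A *v (gC Gm *v (xbar S P t k - obar S t k i))) + (\<Sum>l\<in>{t..<t+N}. z l \<bullet> V l))"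
    by (simp add: split inner_add_right)
  then show ?thesis
    unfolding Zca_def A_def by (rule the_noise_coefficients[rotated]) simp
qed

lemma Zxu_represents:
  assumes "t \<le> k" "k < t + N"
  shows "Fx j \<bullet> xstate S P t V (Suc k) + Fu j \<bullet> ctrl S P t V k
    = Fx j \<bullet> xbar S P t (Suc k) + Fu j \<bullet> ph P k + (\<Sum>l\<in>{t..<t+N}. Zxu S P Fx Fu t N j k l \<bullet> V l)"
proof -
  have k: "t + (k - t) = k" "Suc k - t = Suc (k - t)"
    using assms by auto
  have horizon: "Suc (k - t) \<le> N" "k - t \<le> N"
    using assms by auto
  obtain zx zu where
    zx: "\<forall>l. l \<notin> {t..<t+N} \<longrightarrow> zx l = 0"
      "\<forall>V. Fx j \<bullet> (x_rel S P t V (Suc (k-t)) - xbar_rel S P t (Suc (k-t)))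
        = (\<Sum>l\<in>{t..<t+N}. zx l \<bullet> V l)" and
    zu: "\<forall>l. l \<notin> {t..<t+N} \<longrightarrow> zu l = 0"
      "\<forall>V. Fu j \<bullet> (ctrl S P t V (t + (k-t)) - ph P (t + (k-t))) = (\<Sum>l\<in>{t..<t+N}. zu l \<bullet> V l)"
    using noise_linear_inner[OF state_deviation_linear[OF horizon(1)], where y = "Fx j"]
      noise_linear_inner[OF control_deviation_linear[OF horizon(2)], where y = "Fu j"]
    by blast
  have "\<forall>V. Fx j \<bullet> xstate S P t V (Suc k) + Fu j \<bullet> ctrl S P t V k
    = Fx j \<bullet> xbar S P t (Suc k) + Fu j \<bullet> ph P k + (\<Sum>l\<in>{t..<t+N}. (zx l + zu l) \<bullet> V l)"
    (is "\<forall>V. ?G V = ?c + _")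
  proof
    fix V
    show "?G V = ?c + (\<Sum>l\<in>{t..<t+N}. (zx l + zu l) \<bullet> V l)"
      using zx(2)[rule_format, of V] zu(2)[rule_format, of V]
      unfolding xstate_def xbar_def k inner_diff_right inner_add_left sum.distrib by linarith
  qed
  then have "\<exists>z. (\<forall>l. l \<notin> {t..<t+N} \<longrightarrow> z l = 0) \<and>
      (\<forall>V. ?G V = ?c + (\<Sum>l\<in>{t..<t+N}. z l \<bullet> V l))"
    using zx(1) zu(1) by (intro exI[of _ "\<lambda>l. zx l + zu l"]) simp
  then show ?thesis
    unfolding Zxu_def by (rule the_noise_coefficients[rotated]) simp
qed

lemma CA_iff_noise_bounds:
  "CA S P Gm t N lam nu V \<longleftrightarrow>
   (\<forall>k\<in>{t..<t+N}. \<forall>i. dual_feas Gm lam nu i (Suc k) \<and>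
      (\<Sum>l\<in>{t..<t+N}. Zca S P Gm t N lam i (Suc k) l \<bullet> V l) < Yca S P Gm t lam nu i (Suc k))"
proof -
  have horizon: "{t+1..t+N} = Suc ` {t..<t+N}"
    by (simp add: image_Suc_atLeastLessThan atLeastLessThanSuc_atLeastAtMost)
  have "lam i (Suc k) \<bullet> ((gG Gm ** transpose (gR Gm (Suc k))) *v
        (gC Gm *v (xstate S P t V (Suc k) - ostate S t V (Suc k) i) + gc Gm) + gg Gm)
        < - (nu i (Suc k) \<bullet> ggi Gm i)
      \<longleftrightarrow> (\<Sum>l\<in>{t..<t+N}. Zca S P Gm t N lam i (Suc k) l \<bullet> V l) < Yca S P Gm t lam nu i (Suc k)"
    if "k \<in> {t..<t+N}" for k i
    using Zca_represents[of t "Suc k" N lam i Gm S P V] that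
    by (simp add: matrix_vector_right_distrib inner_add_right Yca_def) linarith
  then show ?thesis
    unfolding CA_def horizon Set.ball_simps(9) by auto
qed

lemma XU_iff_noise_bounds:
  "XU S P Fx Fu f J t N V \<longleftrightarrow>
   (\<forall>k\<in>{t..<t+N}. \<forall>j\<in>{1..J}.
      (\<Sum>l\<in>{t..<t+N}. Zxu S P Fx Fu t N j k l \<bullet> V l) \<le> Yxu S P Fx Fu f t j k)"
proof -
  have "Fx j \<bullet> xstate S P t V (Suc k) + Fu j \<bullet> ctrl S P t V k \<le> f j
      \<longleftrightarrow> (\<Sum>l\<in>{t..<t+N}. Zxu S P Fx Fu t N j k l \<bullet> V l) \<le> Yxu S P Fx Fu f t j k"
    if "k \<in> {t..<t+N}" for k j
  proof -
    have "Fx j \<bullet> xstate S P t V (Suc k) + Fu j \<bullet> ctrl S P t V k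
      = Fx j \<bullet> xbar S P t (Suc k) + Fu j \<bullet> ph P k + (\<Sum>l\<in>{t..<t+N}. Zxu S P Fx Fu t N j k l \<bullet> V l)"
      using that by (intro Zxu_represents) auto
    then show ?thesis
      unfolding Yxu_def by linarith
  qed
  then show ?thesis
    unfolding XU_def by blast
qed

section \<open>Robust constraints over a box\<close>

lemma invertible_matrix_inv:
  fixes A :: "'a::semiring_1^'n^'n"
  assumes "invertible A"
  shows "matrix_inv A ** A = mat 1" "A ** matrix_inv A = mat 1"
proof -
  have "A ** matrix_inv A = mat 1 \<and> matrix_inv A ** A = mat 1"
    using assms unfolding invertible_def matrix_inv_def by (rule someI_ex)
  then show "matrix_inv A ** A = mat 1" "A ** matrix_inv A = mat 1"
    by auto
qed

lemma inner_le_infnorm_bound: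
  fixes w u :: "real^'d::finite"
  assumes "infnorm u \<le> \<gamma>"
  shows "w \<bullet> u \<le> \<gamma> * (\<Sum>a\<in>UNIV. \<bar>w $ a\<bar>)"
proof -
  have "w $ a * u $ a \<le> \<bar>w $ a\<bar> * \<gamma>" for a
  proof -
    have "\<bar>u $ a\<bar> \<le> \<gamma>"
      using component_le_infnorm_cart[of u a] assms by linarith
    then have "\<bar>w $ a\<bar> * \<bar>u $ a\<bar> \<le> \<bar>w $ a\<bar> * \<gamma>"
      by (simp add: mult_left_mono)
    then show ?thesis
      by (metis abs_ge_self abs_mult order_trans)
  qed
  then have "w \<bullet> u \<le> (\<Sum>a\<in>UNIV. \<bar>w $ a\<bar> * \<gamma>)"
    unfolding inner_vec_def by (intro sum_mono) simp
  then show ?thesis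
    by (simp add: sum_distrib_left mult_ac)
qed

lemma noise_sum_le_norm1_kron_inv:
  fixes z V :: "nat \<Rightarrow> real^'d::finite"
  assumes "invertible Gam" "\<forall>l\<in>{t..<t+N}. infnorm (Gam *v V l) \<le> \<gamma>"
  shows "(\<Sum>l\<in>{t..<t+N}. z l \<bullet> V l) \<le> \<gamma> * norm1_kron_inv Gam t N z"
proof -
  have "z l \<bullet> V l \<le> \<gamma> * (\<Sum>a\<in>UNIV. \<bar>(z l v* matrix_inv Gam) $ a\<bar>)" if "l \<in> {t..<t+N}" for l
  proof -
    have "z l \<bullet> V l = (z l v* matrix_inv Gam) \<bullet> (Gam *v V l)"
      by (simp add: dot_lmul_matrix matrix_vector_mul_assoc invertible_matrix_inv[OF assms(1)])
    also have "\<dots> \<le> \<gamma> * (\<Sum>a\<in>UNIV. \<bar>(z l v* matrix_inv Gam) $ a\<bar>)"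
      using assms(2) that by (intro inner_le_infnorm_bound) auto
    finally show ?thesis .
  qed
  then show ?thesis
    unfolding norm1_kron_inv_def sum_distrib_left by (rule sum_mono)
qed

text \<open>The bound is attained at the noise whose scaled blocks \<open>\<Gamma> v\<^sub>l\<close> are the sign vectors
  of \<open>z\<^sub>l \<Gamma>\<^sup>-\<^sup>1\<close>.\<close>
lemma norm1_kron_inv_attained:
  fixes z :: "nat \<Rightarrow> real^'d::finite"
  assumes "invertible Gam" "0 \<le> \<gamma>"
  obtains V where "\<forall>l\<in>{t..<t+N}. infnorm (Gam *v V l) \<le> \<gamma>"
    "(\<Sum>l\<in>{t..<t+N}. z l \<bullet> V l) = \<gamma> * norm1_kron_inv Gam t N z"
proof
  define u where "u l = (\<chi> a. \<gamma> * sgn ((z l v* matrix_inv Gam) $ a))" for l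
  define V where "V l = matrix_inv Gam *v u l" for l
  have GV: "Gam *v V l = u l" for l
    by (simp add: V_def matrix_vector_mul_assoc invertible_matrix_inv[OF assms(1)])
  show "\<forall>l\<in>{t..<t+N}. infnorm (Gam *v V l) \<le> \<gamma>"
    unfolding GV u_def infnorm_cart using assms(2)
    by (auto intro!: cSup_least simp: abs_mult abs_sgn_eq)
  have "z l \<bullet> V l = \<gamma> * (\<Sum>a\<in>UNIV. \<bar>(z l v* matrix_inv Gam) $ a\<bar>)" for l
    unfolding V_def dot_lmul_matrix[symmetric]
    by (simp add: inner_vec_def u_def sum_distrib_left abs_sgn mult.left_commute)
  then show "(\<Sum>l\<in>{t..<t+N}. z l \<bullet> V l) = \<gamma> * norm1_kron_inv Gam t N z"
    by (simp add: norm1_kron_inv_def sum_distrib_left)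
qed

lemma box_worst_case_less:
  assumes "invertible Gam" "0 \<le> \<gamma>"
  shows "(\<forall>V. (\<forall>l\<in>{t..<t+N}. infnorm (Gam *v V l) \<le> \<gamma>) \<longrightarrow> (\<Sum>l\<in>{t..<t+N}. z l \<bullet> V l) < c)
    \<longleftrightarrow> \<gamma> * norm1_kron_inv Gam t N z < c"
proof
  assume "\<forall>V. (\<forall>l\<in>{t..<t+N}. infnorm (Gam *v V l) \<le> \<gamma>) \<longrightarrow> (\<Sum>l\<in>{t..<t+N}. z l \<bullet> V l) < c"
  moreover obtain V where "\<forall>l\<in>{t..<t+N}. infnorm (Gam *v V l) \<le> \<gamma>"
    "(\<Sum>l\<in>{t..<t+N}. z l \<bullet> V l) = \<gamma> * norm1_kron_inv Gam t N z"
    using norm1_kron_inv_attained[OF assms] .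
  ultimately show "\<gamma> * norm1_kron_inv Gam t N z < c"
    by metis
qed (auto intro: le_less_trans[OF noise_sum_le_norm1_kron_inv[OF assms(1)]])

lemma box_worst_case_le:
  assumes "invertible Gam" "0 \<le> \<gamma>"
  shows "(\<forall>V. (\<forall>l\<in>{t..<t+N}. infnorm (Gam *v V l) \<le> \<gamma>) \<longrightarrow> (\<Sum>l\<in>{t..<t+N}. z l \<bullet> V l) \<le> c)
    \<longleftrightarrow> \<gamma> * norm1_kron_inv Gam t N z \<le> c"
proof
  assume "\<forall>V. (\<forall>l\<in>{t..<t+N}. infnorm (Gam *v V l) \<le> \<gamma>) \<longrightarrow> (\<Sum>l\<in>{t..<t+N}. z l \<bullet> V l) \<le> c"
  moreover obtain V where "\<forall>l\<in>{t..<t+N}. infnorm (Gam *v V l) \<le> \<gamma>"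
    "(\<Sum>l\<in>{t..<t+N}. z l \<bullet> V l) = \<gamma> * norm1_kron_inv Gam t N z"
    using norm1_kron_inv_attained[OF assms] .
  ultimately show "\<gamma> * norm1_kron_inv Gam t N z \<le> c"
    by metis
qed (auto intro: order_trans[OF noise_sum_le_norm1_kron_inv[OF assms(1)]])

lemma robust_reformulation:
  fixes S :: "('x::finite, 'u::finite, 'm::finite, 'e::finite) dyn"
    and Gm :: "('x, 'n::finite, 'l::finite, 'm) geo"
    and Gam :: "real^('x + 'm \<times> 'e)^('x + 'm \<times> 'e)"
  assumes "invertible Gam" "\<gamma> > 0"
  shows "(\<forall>V. (\<forall>l\<in>{t..<t+N}. infnorm (Gam *v V l) \<le> \<gamma>) \<longrightarrow>
            CA S P Gm t N lam nu V \<and> XU S P Fx Fu f J t N V)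
    \<longleftrightarrow>
    (\<forall>k\<in>{t..<t+N}.
       (\<forall>i. dual_feas Gm lam nu i (Suc k) \<and>
            Yca S P Gm t lam nu i (Suc k) > \<gamma> * norm1_kron_inv Gam t N (Zca S P Gm t N lam i (Suc k))) \<and>
       (\<forall>j\<in>{1..J}. Yxu S P Fx Fu f t j k - \<gamma> * norm1_kron_inv Gam t N (Zxu S P Fx Fu t N j k) \<ge> 0))"
    (is "(\<forall>V. ?box V \<longrightarrow> _) \<longleftrightarrow> _")
proof -
  have "\<exists>V. ?box V"
    using assms(2) by (intro exI[of _ "\<lambda>l. 0"]) (simp add: infnorm_0)
  then have "(\<forall>V. ?box V \<longrightarrow> CA S P Gm t N lam nu V \<and> XU S P Fx Fu f J t N V) \<longleftrightarrow>
    (\<forall>k\<in>{t..<t+N}.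
       (\<forall>i. dual_feas Gm lam nu i (Suc k) \<and>
          (\<forall>V. ?box V \<longrightarrow>
             (\<Sum>l\<in>{t..<t+N}. Zca S P Gm t N lam i (Suc k) l \<bullet> V l) < Yca S P Gm t lam nu i (Suc k))) \<and>
       (\<forall>j\<in>{1..J}.
          \<forall>V. ?box V \<longrightarrow> (\<Sum>l\<in>{t..<t+N}. Zxu S P Fx Fu t N j k l \<bullet> V l) \<le> Yxu S P Fx Fu f t j k))"
    unfolding CA_iff_noise_bounds XU_iff_noise_bounds by blast
  then show ?thesis
    using assms by (simp add: box_worst_case_less box_worst_case_le)
qed

section \<open>The positive semidefinite square root\<close>

lemma symmetric_inner_commute:
  assumes "transpose S = S"
  shows "(x::real^'d::finite) \<bullet> (S *v y) = (S *v x) \<bullet> y"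
  using dot_lmul_matrix[of x S y] vector_transpose_matrix[of x S] assms by simp

lemma linear_le_quadratic_imp_zero:
  fixes a b :: real
  assumes "\<And>s. 2 * s * a \<le> s\<^sup>2 * b"
  shows "a = 0"
proof (rule ccontr)
  assume "a \<noteq> 0"
  define c where "c = \<bar>b\<bar> + 1"
  have "c > 0"
    unfolding c_def by simp
  have "2 * (a / c) * a \<le> (a / c)\<^sup>2 * b"
    by (rule assms)
  then have "a\<^sup>2 * (2 * c) \<le> a\<^sup>2 * b"
    using \<open>c > 0\<close> by (simp add: field_simps power2_eq_square)
  then have "2 * c \<le> b"
    using \<open>a \<noteq> 0\<close> by simp
  then show False
    unfolding c_def by (simp add: abs_if split: if_splits)
qed

lemma psd_quadratic_form_zero_imp:
  assumes "psd R" "(x::real^'d::finite) \<bullet> (R *v x) = 0"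
  shows "R *v x = 0"
proof -
  have sym: "transpose R = R" and pos: "\<And>v. 0 \<le> v \<bullet> (R *v v)"
    using assms(1) unfolding psd_def by auto
  have "- (y \<bullet> (R *v x)) = 0" for y
  proof (rule linear_le_quadratic_imp_zero)
    fix s :: real
    have "0 \<le> (x + s *\<^sub>R y) \<bullet> (R *v (x + s *\<^sub>R y))"
      by (rule pos)
    also have "\<dots> = x \<bullet> (R *v x) + s * (x \<bullet> (R *v y)) + s * (y \<bullet> (R *v x)) + s\<^sup>2 * (y \<bullet> (R *v y))"
      by (simp add: matrix_vector_right_distrib matrix_vector_mult_scaleR inner_add_left inner_add_right
          power2_eq_square algebra_simps)
    also have "x \<bullet> (R *v y) = y \<bullet> (R *v x)"
      using symmetric_inner_commute[OF sym, of x y] by (simp add: inner_commute)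
    finally show "2 * s * - (y \<bullet> (R *v x)) \<le> s\<^sup>2 * (y \<bullet> (R *v y))"
      using assms(2) by simp
  qed
  from this[of "R *v x"] show ?thesis
    by simp
qed

lemma rayleigh_quotient_attains_max:
  fixes S :: "real^'d::finite^'d"
  assumes W: "subspace W" and w: "w \<in> W" "w \<noteq> 0"
  obtains x where "x \<in> W" "norm x = 1" "\<And>y. y \<in> W \<Longrightarrow> y \<bullet> (S *v y) \<le> (x \<bullet> (S *v x)) * (y \<bullet> y)"
proof -
  define K where "K = W \<inter> sphere 0 1"
  have "compact K"
    unfolding K_def by (intro closed_Int_compact closed_subspace W compact_sphere)
  moreover have "w /\<^sub>R norm w \<in> K"
    using w W unfolding K_def by (auto simp: subspace_scale)
  moreover have "continuous_on K (\<lambda>x. x \<bullet> (S *v x))"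
    by (intro continuous_intros)
  ultimately obtain x where x: "x \<in> K" and max: "\<And>y. y \<in> K \<Longrightarrow> y \<bullet> (S *v y) \<le> x \<bullet> (S *v x)"
    using continuous_attains_sup[of K "\<lambda>x. x \<bullet> (S *v x)"] by blast
  have "y \<bullet> (S *v y) \<le> (x \<bullet> (S *v x)) * (y \<bullet> y)" if "y \<in> W" for y
  proof (cases "y = 0")
    case False
    have "(1 / norm y) *\<^sub>R y \<in> K"
      using that False W unfolding K_def by (auto simp: subspace_scale)
    then have "((1 / norm y) *\<^sub>R y) \<bullet> (S *v ((1 / norm y) *\<^sub>R y)) \<le> x \<bullet> (S *v x)"
      by (rule max)
    then have "(1 / norm y)\<^sup>2 * (y \<bullet> (S *v y)) \<le> x \<bullet> (S *v x)"
      by (simp add: matrix_vector_mult_scaleR power2_eq_square mult_ac)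
    moreover have "(1 / norm y)\<^sup>2 = 1 / (y \<bullet> y)"
      by (simp add: power2_norm_eq_inner[symmetric] power_one_over)
    ultimately show ?thesis
      using False by (simp add: field_simps)
  qed simp
  with x show ?thesis
    unfolding K_def by (intro that) auto
qed

text \<open>Perturbing the maximiser \<open>x\<close> inside \<open>W\<close> shows that \<open>S x - lam x\<close> is orthogonal to
  \<open>W\<close>; since \<open>W\<close> is invariant, it lies in \<open>W\<close> and hence vanishes.\<close>
lemma rayleigh_maximizer_eigenvector:
  fixes S :: "real^'d::finite^'d"
  assumes sym: "transpose S = S" and W: "subspace W" and inv: "\<And>y. y \<in> W \<Longrightarrow> S *v y \<in> W"
    and x: "x \<in> W" "norm x = 1"
    and max: "\<And>y. y \<in> W \<Longrightarrow> y \<bullet> (S *v y) \<le> (x \<bullet> (S *v x)) * (y \<bullet> y)"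
  shows "S *v x = (x \<bullet> (S *v x)) *\<^sub>R x"
proof -
  define lam where "lam = x \<bullet> (S *v x)"
  have "x \<bullet> x = 1"
    using x(2) by (simp add: norm_eq_1)
  have orth: "v \<bullet> (S *v x - lam *\<^sub>R x) = 0" if "v \<in> W" for v
  proof -
    have "- (lam * (x \<bullet> v) - v \<bullet> (S *v x)) = 0"
    proof (rule linear_le_quadratic_imp_zero)
      fix s :: real
      have "0 \<le> lam * ((x + s *\<^sub>R v) \<bullet> (x + s *\<^sub>R v)) - (x + s *\<^sub>R v) \<bullet> (S *v (x + s *\<^sub>R v))"
        using max[of "x + s *\<^sub>R v"] W x(1) that unfolding lam_def by (simp add: subspace_add subspace_scale)
      also have "\<dots> = 2 * s * (lam * (x \<bullet> v) - v \<bullet> (S *v x)) + s\<^sup>2 * (lam * (v \<bullet> v) - v \<bullet> (S *v v))"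
        using \<open>x \<bullet> x = 1\<close> symmetric_inner_commute[OF sym, of x v]
        by (simp add: lam_def matrix_vector_right_distrib matrix_vector_mult_scaleR inner_add_left
            inner_add_right inner_commute power2_eq_square algebra_simps)
      finally show "2 * s * - (lam * (x \<bullet> v) - v \<bullet> (S *v x)) \<le> s\<^sup>2 * (lam * (v \<bullet> v) - v \<bullet> (S *v v))"
        by (simp add: algebra_simps)
    qed
    then show ?thesis
      by (simp add: inner_diff_right inner_commute)
  qed
  have "S *v x - lam *\<^sub>R x \<in> W"
    using W x(1) inv by (simp add: subspace_diff subspace_scale)
  from orth[OF this] show ?thesis
    unfolding lam_def by simp
qed

lemma symmetric_eigenvector_orthogonal:
  fixes S :: "real^'d::finite^'d"
  assumes "transpose S = S" "S *v x = \<mu> *\<^sub>R x" "x \<bullet> y = 0"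
  shows "x \<bullet> (S *v y) = 0"
  using symmetric_inner_commute[OF assms(1), of x y] assms(2,3) by simp

definition orthonormal_eigenbasis :: "real^'d::finite^'d \<Rightarrow> (real^'d) set \<Rightarrow> (real^'d) set \<Rightarrow> bool" where
  "orthonormal_eigenbasis S W B \<longleftrightarrow> finite B \<and> B \<subseteq> W \<and> span B = W \<and> pairwise orthogonal B \<and>
     (\<forall>b\<in>B. norm b = 1 \<and> (\<exists>\<mu>. S *v b = \<mu> *\<^sub>R b))"

lemma orthonormal_eigenbasis_insert:
  assumes W: "subspace W" and x: "x \<in> W" "norm x = 1" "S *v x = \<mu> *\<^sub>R x"
    and B: "orthonormal_eigenbasis S (W \<inter> {y. x \<bullet> y = 0}) B"
  shows "orthonormal_eigenbasis S W (insert x B)"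
proof -
  have B_sub: "B \<subseteq> W" "\<And>b. b \<in> B \<Longrightarrow> x \<bullet> b = 0" and span_B: "span B = W \<inter> {y. x \<bullet> y = 0}"
    using B unfolding orthonormal_eigenbasis_def by auto
  have "x \<bullet> x = 1"
    using x(2) by (simp add: norm_eq_1)
  have "y \<in> span (insert x B)" if "y \<in> W" for y
  proof -
    have "y - (x \<bullet> y) *\<^sub>R x \<in> span B"
      unfolding span_B using that x(1) W \<open>x \<bullet> x = 1\<close>
      by (auto simp: subspace_diff subspace_scale inner_diff_right)
    then have "y - (x \<bullet> y) *\<^sub>R x \<in> span (insert x B)"
      using span_mono[of B "insert x B"] by auto
    moreover have "(x \<bullet> y) *\<^sub>R x \<in> span (insert x B)"
      by (intro span_mul span_base) simp
    ultimately have "(y - (x \<bullet> y) *\<^sub>R x) + (x \<bullet> y) *\<^sub>R x \<in> span (insert x B)"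
      by (rule span_add)
    then show ?thesis
      by simp
  qed
  moreover have "span (insert x B) \<subseteq> W"
    using x(1) B_sub(1) W by (intro span_minimal) auto
  moreover have "pairwise orthogonal (insert x B)"
    using B B_sub(2) unfolding orthonormal_eigenbasis_def
    by (auto simp: pairwise_insert orthogonal_def inner_commute)
  moreover have "\<forall>b\<in>insert x B. norm b = 1 \<and> (\<exists>\<mu>. S *v b = \<mu> *\<^sub>R b)"
    using B x(2,3) unfolding orthonormal_eigenbasis_def by blast
  moreover have "finite (insert x B)" "insert x B \<subseteq> W"
    using B x(1) B_sub(1) unfolding orthonormal_eigenbasis_def by auto
  ultimately show ?thesis
    unfolding orthonormal_eigenbasis_def by blast
qed

text \<open>Spectral theorem, by induction on the dimension of an invariant subspace: a maximiser of the
  Rayleigh quotient is an eigenvector, and its orthogonal complement in the subspace is again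
  invariant.\<close>
lemma symmetric_orthonormal_eigenbasis:
  fixes S :: "real^'d::finite^'d"
  assumes sym: "transpose S = S"
  shows "subspace W \<Longrightarrow> (\<And>y. y \<in> W \<Longrightarrow> S *v y \<in> W) \<Longrightarrow> \<exists>B. orthonormal_eigenbasis S W B"
proof (induction "dim W" arbitrary: W rule: less_induct)
  case less
  show ?case
  proof (cases "W \<subseteq> {0}")
    case True
    then have "W = {0}"
      using less.prems(1) subspace_0 by blast
    then show ?thesis
      unfolding orthonormal_eigenbasis_def by (intro exI[of _ "{}"]) auto
  next
    case False
    then obtain w where w: "w \<in> W" "w \<noteq> 0"
      by blast
    obtain x where x: "x \<in> W" "norm x = 1"
      and max: "\<And>y. y \<in> W \<Longrightarrow> y \<bullet> (S *v y) \<le> (x \<bullet> (S *v x)) * (y \<bullet> y)"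
      using rayleigh_quotient_attains_max[OF less.prems(1) w, where S = S] by blast
    have eigen: "S *v x = (x \<bullet> (S *v x)) *\<^sub>R x"
      using rayleigh_maximizer_eigenvector[OF sym less.prems x max] .
    define W' where "W' = W \<inter> {y. x \<bullet> y = 0}"
    have sub: "subspace W'"
      unfolding W'_def by (intro subspace_inter less.prems(1)) (auto simp: subspace_def inner_add_right)
    have inv: "S *v y \<in> W'" if "y \<in> W'" for y
      using that less.prems(2) symmetric_eigenvector_orthogonal[OF sym eigen]
      unfolding W'_def by auto
    have "x \<notin> W'"
      using x(2) unfolding W'_def by (auto simp: norm_eq_1)
    then have "W' \<subset> W"
      using x(1) unfolding W'_def by blast
    then have "span W' \<subset> span W"
      by (simp only: span_eq_iff[THEN iffD2, OF sub] span_eq_iff[THEN iffD2, OF less.prems(1)])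
    then have "dim W' < dim W"
      by (rule dim_psubset)
    then obtain B where "orthonormal_eigenbasis S W' B"
      using less.hyps[OF _ sub inv] by blast
    then show ?thesis
      unfolding W'_def by (blast intro: orthonormal_eigenbasis_insert[OF less.prems(1) x eigen])
  qed
qed

lemma orthonormal_eigenbasis_inner:
  assumes "orthonormal_eigenbasis S W B" "b \<in> B" "b' \<in> B"
  shows "b' \<bullet> b = (if b' = b then 1 else 0)"
  using assms unfolding orthonormal_eigenbasis_def pairwise_def orthogonal_def
  by (auto simp: norm_eq_1)

lemma orthonormal_eigenbasis_expansion:
  assumes B: "orthonormal_eigenbasis S UNIV B"
  shows "x = (\<Sum>b\<in>B. (b \<bullet> x) *\<^sub>R b)"
proof -
  define y where "y = x - (\<Sum>b\<in>B. (b \<bullet> x) *\<^sub>R b)"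
  have "finite B"
    using B unfolding orthonormal_eigenbasis_def by blast
  have "b' \<bullet> (\<Sum>b\<in>B. (b \<bullet> x) *\<^sub>R b) = b' \<bullet> x" if "b' \<in> B" for b'
  proof -
    have "b' \<bullet> (\<Sum>b\<in>B. (b \<bullet> x) *\<^sub>R b) = (\<Sum>b\<in>B. if b = b' then b \<bullet> x else 0)"
      unfolding inner_sum_right using orthonormal_eigenbasis_inner[OF B _ that] by (intro sum.cong) auto
    then show ?thesis
      using that \<open>finite B\<close> by (simp add: inner_commute)
  qed
  then have "orthogonal y b" if "b \<in> B" for b
  proof -
    have "b \<bullet> y = 0"
      using that \<open>b \<in> B \<Longrightarrow> _\<close> unfolding y_def by (simp add: inner_diff_right)
    then show ?thesis
      unfolding orthogonal_def by (simp add: inner_commute)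
  qed
  moreover have "y \<in> span B"
    using B unfolding orthonormal_eigenbasis_def by blast
  ultimately have "orthogonal y y"
    using orthogonal_to_span[of y B y] by blast
  then show ?thesis
    unfolding y_def orthogonal_def by simp
qed

lemma orthonormal_eigenbasis_matrix_eq:
  fixes A C :: "real^'d::finite^'d"
  assumes B: "orthonormal_eigenbasis S UNIV B" and eq: "\<And>b. b \<in> B \<Longrightarrow> A *v b = C *v b"
  shows "A = C"
proof -
  have "A *v x = C *v x" for x
  proof -
    have "A *v x = (\<Sum>b\<in>B. (b \<bullet> x) *\<^sub>R (A *v b))"
      by (subst orthonormal_eigenbasis_expansion[OF B, of x])
        (simp add: linear_sum[OF matrix_vector_mul_linear] matrix_vector_mult_scaleR)
    also have "\<dots> = (\<Sum>b\<in>B. (b \<bullet> x) *\<^sub>R (C *v b))"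
      using eq by simp
    also have "\<dots> = C *v x"
      by (subst (2) orthonormal_eigenbasis_expansion[OF B, of x])
        (simp add: linear_sum[OF matrix_vector_mul_linear] matrix_vector_mult_scaleR)
    finally show ?thesis .
  qed
  then show ?thesis
    by (simp add: matrix_eq)
qed

lemma sum_outer_matrix_vector_mult:
  "(\<chi> i j. \<Sum>b\<in>B. c b * (b $ i * b $ j)) *v x = (\<Sum>b\<in>B. (c b * (b \<bullet> x)) *\<^sub>R b)"
proof -
  have "((\<chi> i j. \<Sum>b\<in>B. c b * (b $ i * b $ j)) *v x) $ i = (\<Sum>b\<in>B. (c b * (b \<bullet> x)) * b $ i)" for i
  proof -
    have "((\<chi> i j. \<Sum>b\<in>B. c b * (b $ i * b $ j)) *v x) $ i
        = (\<Sum>j\<in>UNIV. \<Sum>b\<in>B. c b * (b $ i * b $ j) * x $ j)"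
      by (simp add: matrix_vector_mult_def sum_distrib_right)
    also have "\<dots> = (\<Sum>b\<in>B. \<Sum>j\<in>UNIV. c b * (b $ i * b $ j) * x $ j)"
      by (rule sum.swap)
    also have "\<dots> = (\<Sum>b\<in>B. (c b * (b \<bullet> x)) * b $ i)"
      by (simp add: inner_vec_def sum_distrib_left sum_distrib_right mult_ac)
    finally show ?thesis .
  qed
  then show ?thesis
    by (simp add: vec_eq_iff sum_component)
qed

lemma orthonormal_eigenbasis_eigenvalue:
  assumes "orthonormal_eigenbasis S W B" "b \<in> B"
  shows "S *v b = (b \<bullet> (S *v b)) *\<^sub>R b"
proof -
  have "b \<bullet> b = 1" "\<exists>\<mu>. S *v b = \<mu> *\<^sub>R b"
    using assms unfolding orthonormal_eigenbasis_def by (auto simp: norm_eq_1)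
  then show ?thesis
    by auto
qed

lemma orthonormal_eigenbasis_outer_matrix:
  assumes B: "orthonormal_eigenbasis S W B" and "b \<in> B"
  shows "(\<chi> i j. \<Sum>b'\<in>B. c b' * (b' $ i * b' $ j)) *v b = c b *\<^sub>R b"
proof -
  have "finite B"
    using B unfolding orthonormal_eigenbasis_def by blast
  have "(\<chi> i j. \<Sum>b'\<in>B. c b' * (b' $ i * b' $ j)) *v b = (\<Sum>b'\<in>B. if b' = b then c b *\<^sub>R b else 0)"
    unfolding sum_outer_matrix_vector_mult using orthonormal_eigenbasis_inner[OF B \<open>b \<in> B\<close>]
    by (intro sum.cong) auto
  then show ?thesis
    using \<open>b \<in> B\<close> \<open>finite B\<close> by simp
qed

lemma psd_sqrt_exists:
  fixes Sig :: "real^'d::finite^'d"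
  assumes "psd Sig"
  shows "\<exists>R. psd R \<and> R ** R = Sig"
proof -
  have sym: "transpose Sig = Sig" and pos: "\<And>v. 0 \<le> v \<bullet> (Sig *v v)"
    using assms unfolding psd_def by auto
  obtain B where B: "orthonormal_eigenbasis Sig UNIV B"
    using symmetric_orthonormal_eigenbasis[OF sym, of UNIV] by auto
  define \<mu> where "\<mu> b = b \<bullet> (Sig *v b)" for b
  have eigen: "Sig *v b = \<mu> b *\<^sub>R b" if "b \<in> B" for b
    unfolding \<mu>_def by (rule orthonormal_eigenbasis_eigenvalue[OF B that])
  define R :: "real^'d^'d" where "R = (\<chi> i j. \<Sum>b\<in>B. sqrt (\<mu> b) * (b $ i * b $ j))"
  have R_eigen: "R *v b = sqrt (\<mu> b) *\<^sub>R b" if "b \<in> B" for b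
    unfolding R_def by (rule orthonormal_eigenbasis_outer_matrix[OF B that])
  have "transpose R = R"
    unfolding R_def transpose_def by (simp add: vec_eq_iff mult.commute)
  moreover have "0 \<le> v \<bullet> (R *v v)" for v
  proof -
    have "v \<bullet> (R *v v) = (\<Sum>b\<in>B. sqrt (\<mu> b) * (b \<bullet> v)\<^sup>2)"
      unfolding R_def sum_outer_matrix_vector_mult
      by (simp add: inner_sum_right inner_commute power2_eq_square mult_ac)
    also have "\<dots> \<ge> 0"
      using pos unfolding \<mu>_def by (intro sum_nonneg mult_nonneg_nonneg) auto
    finally show ?thesis .
  qed
  moreover have "R ** R = Sig"
  proof (rule orthonormal_eigenbasis_matrix_eq[OF B])
    fix b
    assume "b \<in> B"
    have "(R ** R) *v b = R *v (R *v b)"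
      by (simp add: matrix_vector_mul_assoc)
    also have "\<dots> = \<mu> b *\<^sub>R b"
      using \<open>b \<in> B\<close> pos[of b] by (simp add: R_eigen matrix_vector_mult_scaleR \<mu>_def)
    finally show "(R ** R) *v b = Sig *v b"
      using eigen[OF \<open>b \<in> B\<close>] by simp
  qed
  ultimately show ?thesis
    unfolding psd_def by blast
qed

text \<open>If \<open>R\<^sup>2 = Q\<^sup>2\<close>, an eigenvector \<open>b\<close> of \<open>R - Q\<close> with eigenvalue \<open>\<mu>\<close> satisfies
  \<open>\<mu> (b\<bullet>Rb + b\<bullet>Qb) = b\<bullet>(R(R-Q)b + (R-Q)Qb) = b\<bullet>(R\<^sup>2 - Q\<^sup>2)b = 0\<close>, which forces \<open>(R - Q)b = 0\<close>.\<close>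
lemma psd_sqrt_unique:
  fixes R Q :: "real^'d::finite^'d"
  assumes R: "psd R" and Q: "psd Q" and sq: "R ** R = Q ** Q"
  shows "R = Q"
proof -
  define D where "D = R - Q"
  have "transpose D = D"
    using R Q unfolding D_def psd_def by (simp add: transpose_def vec_eq_iff)
  then obtain B where B: "orthonormal_eigenbasis D UNIV B"
    using symmetric_orthonormal_eigenbasis[of D UNIV] by auto
  have "D *v b = 0 *v b" if "b \<in> B" for b
  proof -
    define \<mu> where "\<mu> = b \<bullet> (D *v b)"
    have eigen: "D *v b = \<mu> *\<^sub>R b"
      unfolding \<mu>_def by (rule orthonormal_eigenbasis_eigenvalue[OF B that])
    have "R *v (R *v b) = Q *v (Q *v b)"
      using sq by (simp add: matrix_vector_mul_assoc)
    then have "R *v (D *v b) + D *v (Q *v b) = 0"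
      unfolding D_def by (simp add: matrix_vector_mult_diff_rdistrib matrix_vector_mult_diff_distrib)
    then have "b \<bullet> (R *v (D *v b)) + b \<bullet> (D *v (Q *v b)) = 0"
      by (metis inner_add_right inner_zero_right)
    moreover have "b \<bullet> (D *v (Q *v b)) = (D *v b) \<bullet> (Q *v b)"
      by (rule symmetric_inner_commute[OF \<open>transpose D = D\<close>])
    ultimately have "\<mu> * (b \<bullet> (R *v b) + b \<bullet> (Q *v b)) = 0"
      unfolding eigen by (simp add: matrix_vector_mult_scaleR algebra_simps)
    moreover have "0 \<le> b \<bullet> (R *v b)" "0 \<le> b \<bullet> (Q *v b)"
      using R Q unfolding psd_def by auto
    ultimately have "\<mu> = 0 \<or> (b \<bullet> (R *v b) = 0 \<and> b \<bullet> (Q *v b) = 0)"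
      unfolding mult_eq_0_iff by linarith
    then have "\<mu> = 0 \<or> (R *v b = 0 \<and> Q *v b = 0)"
      using psd_quadratic_form_zero_imp R Q by blast
    then show ?thesis
      using eigen unfolding D_def by (auto simp: matrix_vector_mult_diff_rdistrib)
  qed
  then have "D = 0"
    by (rule orthonormal_eigenbasis_matrix_eq[OF B])
  then show ?thesis
    unfolding D_def by simp
qed

lemma psd_sqrt:
  fixes Sig :: "real^'d::finite^'d"
  assumes "psd Sig"
  shows "psd (psd_sqrt Sig)" "psd_sqrt Sig ** psd_sqrt Sig = Sig"
proof -
  have "\<exists>!R. psd R \<and> R ** R = Sig"
    using psd_sqrt_exists[OF assms] psd_sqrt_unique by blast
  then have "psd (psd_sqrt Sig) \<and> psd_sqrt Sig ** psd_sqrt Sig = Sig"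
    unfolding psd_sqrt_def by (rule theI')
  then show "psd (psd_sqrt Sig)" "psd_sqrt Sig ** psd_sqrt Sig = Sig"
    by auto
qed

lemma norm_vector_matrix_psd_sqrt:
  fixes Sig :: "real^'d::finite^'d"
  assumes "psd Sig"
  shows "(norm (z v* psd_sqrt Sig))\<^sup>2 = z \<bullet> (Sig *v z)"
proof -
  define R where "R = psd_sqrt Sig"
  have "transpose R = R" "R ** R = Sig"
    using psd_sqrt[OF assms] unfolding R_def psd_def by auto
  then have "(norm (z v* R))\<^sup>2 = z \<bullet> (R *v (R *v z))"
    using symmetric_inner_commute[of R z "R *v z"] vector_transpose_matrix[of z R]
    by (simp add: power2_norm_eq_inner)
  also have "\<dots> = z \<bullet> (Sig *v z)"
    using \<open>R ** R = Sig\<close> by (simp add: matrix_vector_mul_assoc)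
  finally show ?thesis
    unfolding R_def .
qed

section \<open>Tail bounds\<close>

interpretation std_normal: real_distribution std_normal_distribution
  by (rule real_dist_normal_dist)

lemma std_normal_null_sets_iff:
  "A \<in> null_sets std_normal_distribution \<longleftrightarrow> A \<in> null_sets lborel"
proof -
  have "A \<in> null_sets std_normal_distribution \<longleftrightarrow> A \<in> sets lborel \<and> (AE x in lborel. x \<notin> A)"
    by (subst null_sets_density_iff) (auto simp: std_normal_density_def)
  then show ?thesis
    using AE_not_in[of A lborel] by (auto simp: AE_iff_null_sets)
qed

lemma isCont_std_normal_cdf: "isCont std_normal_cdf x"
  unfolding std_normal_cdf_def
  by (simp add: std_normal.isCont_cdf measure_eq_0_null_sets std_normal_null_sets_iff
      finite_imp_null_set_lborel)

lemma std_normal_cdf_strict_mono: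
  assumes "a < b"
  shows "std_normal_cdf a < std_normal_cdf b"
proof -
  have "{a<..b} \<notin> null_sets lborel"
    using assms by (auto simp: null_sets_def)
  have "measure std_normal_distribution {a<..b} \<noteq> 0"
  proof
    assume "measure std_normal_distribution {a<..b} = 0"
    then have "{a<..b} \<in> null_sets std_normal_distribution"
      by (simp add: null_sets_def std_normal.emeasure_eq_measure)
    with \<open>{a<..b} \<notin> null_sets lborel\<close> show False
      by (simp add: std_normal_null_sets_iff)
  qed
  then show ?thesis
    using std_normal.cdf_diff_eq[OF assms] measure_nonneg[of std_normal_distribution "{a<..b}"]
    unfolding std_normal_cdf_def by linarith
qed

lemma std_normal_cdf_quantile:
  assumes "0 < p" "p < 1"
  shows "std_normal_cdf (std_normal_quantile p) = p"
proof -
  have "\<forall>\<^sub>F x in at_bot. std_normal_cdf x < p"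
    using std_normal.cdf_lim_at_bot assms(1) unfolding std_normal_cdf_def by (rule order_tendstoD)
  then obtain a where a: "std_normal_cdf a < p"
    by (auto simp: eventually_at_bot_linorder)
  have "\<forall>\<^sub>F x in at_top. p < std_normal_cdf x"
    using std_normal.cdf_lim_at_top_prob assms(2) unfolding std_normal_cdf_def by (rule order_tendstoD)
  then obtain b where b: "p < std_normal_cdf b"
    by (auto simp: eventually_at_top_linorder)
  have "a \<le> b"
    using a b std_normal_cdf_strict_mono[of b a] by linarith
  then obtain x where x: "std_normal_cdf x = p"
    using IVT'[of std_normal_cdf a p b] a b isCont_std_normal_cdf
    by (auto simp: continuous_at_imp_continuous_on)
  have "y = x" if "std_normal_cdf y = p" for y
    using std_normal_cdf_strict_mono[of x y] std_normal_cdf_strict_mono[of y x] that x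
    by (cases x y rule: linorder_cases) auto
  with x have "\<exists>!x. std_normal_cdf x = p"
    by blast
  then show ?thesis
    unfolding std_normal_quantile_def by (rule theI')
qed

lemma centered_gaussian_rv_measurable:
  "centered_gaussian_rv Pm X s2 \<Longrightarrow> X \<in> borel_measurable Pm"
  unfolding centered_gaussian_rv_def by (auto dest: distributed_measurable)

lemma gaussian_tail:
  assumes "prob_space Pm" and X: "centered_gaussian_rv Pm X s2" and p: "0 < p" "p < 1"
  shows "measure Pm {w \<in> space Pm. std_normal_quantile p * sqrt s2 < X w} \<le> 1 - p"
proof -
  interpret prob_space Pm by fact
  consider (degenerate) "s2 = 0" "X \<in> borel_measurable Pm" "AE w in Pm. X w = 0"
    | (proper) "0 < s2" "distributed Pm lborel X (normal_density 0 (sqrt s2))"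
    using X unfolding centered_gaussian_rv_def by blast
  then show ?thesis
  proof cases
    case degenerate
    then have "measure Pm {w \<in> space Pm. std_normal_quantile p * sqrt s2 < X w} = 0"
      by (intro prob_eq_0_AE) (auto elim: AE_mp)
    then show ?thesis
      using p by simp
  next
    case proper
    define \<sigma> where "\<sigma> = sqrt s2"
    define q where "q = std_normal_quantile p"
    define Z where "Z w = X w / \<sigma>" for w
    have "\<sigma> > 0"
      using proper unfolding \<sigma>_def by simp
    have Z: "distributed Pm lborel Z std_normal_density"
      using normal_standard_normal_convert[OF \<open>\<sigma> > 0\<close>, of X 0] proper(2)
      unfolding Z_def \<sigma>_def by simp
    have "{w \<in> space Pm. q * \<sigma> < X w} = Z -` {q<..} \<inter> space Pm"
      using \<open>\<sigma> > 0\<close> by (auto simp: Z_def field_simps)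
    then have "measure Pm {w \<in> space Pm. q * \<sigma> < X w} = measure (distr Pm lborel Z) {q<..}"
      by (simp add: measure_distr[OF distributed_measurable[OF Z]])
    also have "\<dots> = measure std_normal_distribution (space std_normal_distribution - {..q})"
      by (simp add: distributed_distr_eq_density[OF Z] Compl_eq_Diff_UNIV[symmetric])
    also have "\<dots> = 1 - measure std_normal_distribution {..q}"
      by (rule std_normal.prob_compl) simp
    also have "measure std_normal_distribution {..q} = std_normal_cdf q"
      by (simp add: std_normal_cdf_def cdf_def)
    also have "std_normal_cdf q = p"
      unfolding q_def using std_normal_cdf_quantile[OF p] .
    finally show ?thesis
      unfolding q_def \<sigma>_def by simp
  qed
qed

text \<open>Cantelli's one-sided Chebyshev inequality, by Markov's inequality for \<open>(X + s2/a)\<^sup>2\<close>.\<close>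
lemma cantelli_inequality:
  assumes "prob_space Pm" and iX: "integrable Pm X" and iX2: "integrable Pm (\<lambda>w. (X w)\<^sup>2)"
    and mean: "(\<integral>w. X w \<partial>Pm) = 0" and var: "(\<integral>w. (X w)\<^sup>2 \<partial>Pm) = s2" and "0 < a"
  shows "measure Pm {w \<in> space Pm. a \<le> X w} \<le> s2 / (s2 + a\<^sup>2)"
proof -
  interpret prob_space Pm by fact
  have [measurable]: "X \<in> borel_measurable Pm"
    using iX by (rule borel_measurable_integrable)
  have "0 \<le> s2"
    unfolding var[symmetric] by (intro integral_nonneg_AE) auto
  define u where "u = s2 / a"
  have "0 \<le> u"
    unfolding u_def using \<open>0 \<le> s2\<close> \<open>0 < a\<close> by simp
  have shifted: "(\<lambda>w. (X w + u)\<^sup>2) = (\<lambda>w. (X w)\<^sup>2 + 2 * u * X w + u\<^sup>2)"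
    by (simp add: fun_eq_iff power2_sum algebra_simps)
  have iY: "integrable Pm (\<lambda>w. (X w + u)\<^sup>2)"
    unfolding shifted using iX iX2 by simp
  have EY: "(\<integral>w. (X w + u)\<^sup>2 \<partial>Pm) = s2 + u\<^sup>2"
    unfolding shifted using iX iX2 mean var by (simp add: prob_space)
  have "measure Pm {w \<in> space Pm. a \<le> X w} \<le> measure Pm {w \<in> space Pm. (a + u)\<^sup>2 \<le> (X w + u)\<^sup>2}"
    using \<open>0 \<le> u\<close> \<open>0 < a\<close> by (intro finite_measure_mono) (auto intro!: power_mono)
  also have "\<dots> \<le> (\<integral>w. (X w + u)\<^sup>2 \<partial>Pm) / (a + u)\<^sup>2"
    using \<open>0 \<le> u\<close> \<open>0 < a\<close> by (intro integral_Markov_inequality_measure[OF iY]) auto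
  also have "\<dots> = (s2 + u\<^sup>2) / (a + u)\<^sup>2"
    by (simp only: EY)
  also have "\<dots> = s2 / (s2 + a\<^sup>2)"
  proof -
    have "a + u = (s2 + a\<^sup>2) / a" "s2 + u\<^sup>2 = s2 * (s2 + a\<^sup>2) / a\<^sup>2"
      unfolding u_def using \<open>0 < a\<close> by (simp_all add: field_simps power2_eq_square)
    moreover have "0 < s2 + a\<^sup>2"
      using \<open>0 < a\<close> \<open>0 \<le> s2\<close> by (simp add: add_nonneg_pos)
    ultimately show ?thesis
      using \<open>0 < a\<close> by (simp add: power_divide power2_eq_square)
  qed
  finally show ?thesis .
qed

lemma cantelli_tail:
  assumes "prob_space Pm" and iX: "integrable Pm X" and iX2: "integrable Pm (\<lambda>w. (X w)\<^sup>2)"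
    and mean: "(\<integral>w. X w \<partial>Pm) = 0" and var: "(\<integral>w. (X w)\<^sup>2 \<partial>Pm) = s2" and "0 < g"
  shows "measure Pm {w \<in> space Pm. g * sqrt s2 < X w} \<le> 1 / (1 + g\<^sup>2)"
proof -
  interpret prob_space Pm by fact
  have [measurable]: "X \<in> borel_measurable Pm"
    using iX by (rule borel_measurable_integrable)
  have "0 \<le> s2"
    unfolding var[symmetric] by (intro integral_nonneg_AE) auto
  show ?thesis
  proof (cases "s2 = 0")
    case True
    then have "AE w in Pm. (X w)\<^sup>2 = 0"
      using var iX2 by (subst integral_nonneg_eq_0_iff_AE[symmetric]) auto
    then have "measure Pm {w \<in> space Pm. g * sqrt s2 < X w} = 0"
      using True by (intro prob_eq_0_AE) (auto elim: AE_mp)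
    then show ?thesis
      by (simp add: add_pos_nonneg)
  next
    case False
    then have "0 < g * sqrt s2"
      using \<open>0 \<le> s2\<close> \<open>0 < g\<close> by simp
    have "measure Pm {w \<in> space Pm. g * sqrt s2 < X w} \<le> measure Pm {w \<in> space Pm. g * sqrt s2 \<le> X w}"
      by (intro finite_measure_mono) auto
    also have "\<dots> \<le> s2 / (s2 + (g * sqrt s2)\<^sup>2)"
      by (rule cantelli_inequality[OF assms(1-5) \<open>0 < g * sqrt s2\<close>])
    also have "s2 + (g * sqrt s2)\<^sup>2 = s2 * (1 + g\<^sup>2)"
      using \<open>0 \<le> s2\<close> by (simp add: power_mult_distrib algebra_simps)
    also have "s2 / (s2 * (1 + g\<^sup>2)) = 1 / (1 + g\<^sup>2)"
      using False by simp
    finally show ?thesis .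
  qed
qed

lemma stacked_moments_linear_form:
  fixes V :: "'w \<Rightarrow> nat \<Rightarrow> real^'d::finite" and z :: "nat \<Rightarrow> real^'d"
  assumes "stacked_moments Pm V t N Sig"
  defines "X \<equiv> \<lambda>w. \<Sum>l\<in>{t..<t+N}. z l \<bullet> V w l"
  shows "integrable Pm X" "integrable Pm (\<lambda>w. (X w)\<^sup>2)" "(\<integral>w. X w \<partial>Pm) = 0"
    "(\<integral>w. (X w)\<^sup>2 \<partial>Pm) = (\<Sum>l\<in>{t..<t+N}. z l \<bullet> (Sig *v z l))"
proof -
  define I where "I = {t..<t+N}"
  have mean: "\<And>l a. l \<in> I \<Longrightarrow> integrable Pm (\<lambda>w. V w l $ a) \<and> (\<integral>w. V w l $ a \<partial>Pm) = 0"
    and cov: "\<And>l l' a b. l \<in> I \<Longrightarrow> l' \<in> I \<Longrightarrow> integrable Pm (\<lambda>w. V w l $ a * V w l' $ b) \<and>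
      (\<integral>w. V w l $ a * V w l' $ b \<partial>Pm) = (if l = l' then Sig $ a $ b else 0)"
    using assms(1) unfolding stacked_moments_def I_def by blast+
  have X: "X = (\<lambda>w. \<Sum>l\<in>I. \<Sum>a\<in>UNIV. z l $ a * V w l $ a)"
    unfolding X_def I_def by (simp add: inner_vec_def)
  have X2: "(\<lambda>w. (X w)\<^sup>2) =
      (\<lambda>w. \<Sum>l\<in>I. \<Sum>l'\<in>I. \<Sum>a\<in>UNIV. \<Sum>b\<in>UNIV. (z l $ a * z l' $ b) * (V w l $ a * V w l' $ b))"
    unfolding X power2_eq_square by (simp add: sum_product mult_ac)
  show "integrable Pm X" "(\<integral>w. X w \<partial>Pm) = 0"
    unfolding X using mean by (simp_all add: integral_sum)
  show "integrable Pm (\<lambda>w. (X w)\<^sup>2)"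
    unfolding X2 using cov by simp
  have "(\<integral>w. (X w)\<^sup>2 \<partial>Pm) =
      (\<Sum>l\<in>I. \<Sum>l'\<in>I. \<Sum>a\<in>UNIV. \<Sum>b\<in>UNIV. (z l $ a * z l' $ b) * (if l = l' then Sig $ a $ b else 0))"
    unfolding X2 using cov by (simp add: integral_sum)
  also have "\<dots> = (\<Sum>l\<in>I. \<Sum>l'\<in>I.
      if l' = l then \<Sum>a\<in>UNIV. \<Sum>b\<in>UNIV. (z l $ a * z l $ b) * Sig $ a $ b else 0)"
    by (intro sum.cong refl) auto
  also have "\<dots> = (\<Sum>l\<in>I. \<Sum>a\<in>UNIV. \<Sum>b\<in>UNIV. (z l $ a * z l $ b) * Sig $ a $ b)"
    by (simp add: I_def)
  also have "\<dots> = (\<Sum>l\<in>I. z l \<bullet> (Sig *v z l))"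
    by (simp add: inner_vec_def matrix_vector_mult_def sum_distrib_left mult_ac)
  finally show "(\<integral>w. (X w)\<^sup>2 \<partial>Pm) = (\<Sum>l\<in>{t..<t+N}. z l \<bullet> (Sig *v z l))"
    unfolding I_def .
qed

section \<open>Chance constraints\<close>

lemma (in prob_space) prob_UN_le_card_mult:
  fixes d :: real
  assumes "finite I" "\<And>i. i \<in> I \<Longrightarrow> A i \<subseteq> B i" "\<And>i. i \<in> I \<Longrightarrow> B i \<in> events"
    and "\<And>i. i \<in> I \<Longrightarrow> prob (B i) \<le> d"
  shows "prob (\<Union>i\<in>I. A i) \<le> card I * d"
proof -
  have "prob (\<Union>i\<in>I. A i) \<le> prob (\<Union>i\<in>I. B i)"
    using assms(1-3) by (intro finite_measure_mono sets.finite_UN) auto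
  also have "\<dots> \<le> (\<Sum>i\<in>I. prob (B i))"
    using assms(1,3) by (intro finite_measure_subadditive_finite) auto
  also have "\<dots> \<le> card I * d"
    using assms(4) sum_bounded_above[of I "\<lambda>i. prob (B i)" d] by simp
  finally show ?thesis .
qed

lemma chance_constraints_union_bound:
  fixes S :: "('x::finite, 'u::finite, 'm::finite, 'e::finite) dyn"
    and Gm :: "('x, 'n::finite, 'l::finite, 'm) geo"
    and Sig :: "real^('x + 'm \<times> 'e)^('x + 'm \<times> 'e)"
    and V :: "'w \<Rightarrow> nat \<Rightarrow> real^('x + 'm \<times> 'e)"
  assumes "prob_space Pm" "N \<ge> 1" "J \<ge> 1"
    and measurable: "\<And>z. (\<lambda>w. \<Sum>l\<in>{t..<t+N}. z l \<bullet> V w l) \<in> borel_measurable Pm"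
    and tail_ca: "\<And>z. measure Pm {w \<in> space Pm.
        \<gamma>\<^sub>c\<^sub>a * norm2_kron_sqrt Sig t N z < (\<Sum>l\<in>{t..<t+N}. z l \<bullet> V w l)} \<le> \<epsilon> / (2 * real N * real CARD('m))"
    and tail_xu: "\<And>z. measure Pm {w \<in> space Pm.
        \<gamma>\<^sub>x\<^sub>u * norm2_kron_sqrt Sig t N z < (\<Sum>l\<in>{t..<t+N}. z l \<bullet> V w l)} \<le> \<epsilon> / (2 * real N * real J)"
    and margins: "\<forall>k\<in>{t..<t+N}.
      (\<forall>i. dual_feas Gm lam nu i (Suc k) \<and>
         Yca S P Gm t lam nu i (Suc k) > \<gamma>\<^sub>c\<^sub>a * norm2_kron_sqrt Sig t N (Zca S P Gm t N lam i (Suc k))) \<and>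
      (\<forall>j\<in>{1..J}. Yxu S P Fx Fu f t j k \<ge> \<gamma>\<^sub>x\<^sub>u * norm2_kron_sqrt Sig t N (Zxu S P Fx Fu t N j k))"
  shows "measure Pm {w \<in> space Pm. CA S P Gm t N lam nu (V w) \<and> XU S P Fx Fu f J t N (V w)} \<ge> 1 - \<epsilon>"
proof -
  interpret prob_space Pm by fact
  define K where "K = {t..<t+N}"
  define noise where "noise z w = (\<Sum>l\<in>K. z l \<bullet> V w l)" for z w
  define zca where "zca p = Zca S P Gm t N lam (snd p) (Suc (fst p))" for p :: "nat \<times> 'm"
  define zxu where "zxu p = Zxu S P Fx Fu t N (snd p) (fst p)" for p :: "nat \<times> nat"
  define bad_ca where
    "bad_ca p = {w \<in> space Pm. Yca S P Gm t lam nu (snd p) (Suc (fst p)) \<le> noise (zca p) w}"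
    for p :: "nat \<times> 'm"
  define bad_xu where "bad_xu p = {w \<in> space Pm. Yxu S P Fx Fu f t (snd p) (fst p) < noise (zxu p) w}"
    for p :: "nat \<times> nat"
  have [measurable]: "noise z \<in> borel_measurable Pm" for z
    using measurable unfolding noise_def K_def .
  have good: "{w \<in> space Pm. CA S P Gm t N lam nu (V w) \<and> XU S P Fx Fu f J t N (V w)}
      = space Pm - ((\<Union>p\<in>K \<times> UNIV. bad_ca p) \<union> (\<Union>p\<in>K \<times> {1..J}. bad_xu p))"
    using margins unfolding CA_iff_noise_bounds XU_iff_noise_bounds
    by (auto simp: bad_ca_def bad_xu_def noise_def zca_def zxu_def K_def not_le not_less)
      (meson atLeastLessThan_iff not_le, meson atLeastLessThan_iff atLeastAtMost_iff not_less)
  have "prob (\<Union>p\<in>K \<times> UNIV. bad_ca p)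
      \<le> card (K \<times> (UNIV :: 'm set)) * (\<epsilon> / (2 * real N * real CARD('m)))"
  proof (rule prob_UN_le_card_mult)
    fix p :: "nat \<times> 'm"
    show "{w \<in> space Pm. \<gamma>\<^sub>c\<^sub>a * norm2_kron_sqrt Sig t N (zca p) < noise (zca p) w} \<in> events"
      by measurable
    assume "p \<in> K \<times> UNIV"
    then have "\<gamma>\<^sub>c\<^sub>a * norm2_kron_sqrt Sig t N (zca p) < Yca S P Gm t lam nu (snd p) (Suc (fst p))"
      using margins unfolding zca_def K_def by (cases p) auto
    then show "bad_ca p \<subseteq> {w \<in> space Pm. \<gamma>\<^sub>c\<^sub>a * norm2_kron_sqrt Sig t N (zca p) < noise (zca p) w}"
      unfolding bad_ca_def by auto
  qed (use tail_ca in \<open>simp_all add: K_def noise_def\<close>)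
  moreover have "prob (\<Union>p\<in>K \<times> {1..J}. bad_xu p) \<le> card (K \<times> {1..J}) * (\<epsilon> / (2 * real N * real J))"
  proof (rule prob_UN_le_card_mult)
    fix p :: "nat \<times> nat"
    show "{w \<in> space Pm. \<gamma>\<^sub>x\<^sub>u * norm2_kron_sqrt Sig t N (zxu p) < noise (zxu p) w} \<in> events"
      by measurable
    assume "p \<in> K \<times> {1..J}"
    then have "\<gamma>\<^sub>x\<^sub>u * norm2_kron_sqrt Sig t N (zxu p) \<le> Yxu S P Fx Fu f t (snd p) (fst p)"
      using margins unfolding zxu_def K_def by (cases p) auto
    then show "bad_xu p \<subseteq> {w \<in> space Pm. \<gamma>\<^sub>x\<^sub>u * norm2_kron_sqrt Sig t N (zxu p) < noise (zxu p) w}"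
      unfolding bad_xu_def by auto
  qed (use tail_xu in \<open>simp_all add: K_def noise_def\<close>)
  moreover have "card (K \<times> (UNIV :: 'm set)) * (\<epsilon> / (2 * real N * real CARD('m))) = \<epsilon> / 2"
    "card (K \<times> {1..J}) * (\<epsilon> / (2 * real N * real J)) = \<epsilon> / 2"
    using assms(2,3) by (simp_all add: K_def card_cartesian_product)
  moreover have "prob ((\<Union>p\<in>K \<times> UNIV. bad_ca p) \<union> (\<Union>p\<in>K \<times> {1..J}. bad_xu p))
      \<le> prob (\<Union>p\<in>K \<times> UNIV. bad_ca p) + prob (\<Union>p\<in>K \<times> {1..J}. bad_xu p)"
    by (rule measure_Un_le) (auto simp: bad_ca_def bad_xu_def K_def)
  ultimately show ?thesis
    unfolding good by (subst prob_compl) (auto simp: bad_ca_def bad_xu_def K_def)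
qed

lemma risk_share_bounds:
  assumes "1 \<le> N" "1 \<le> M" "0 < \<epsilon>" "\<epsilon> < 1"
  shows "\<epsilon> < 2 * real N * real M" "0 < \<epsilon> / (2 * real N * real M)" "\<epsilon> / (2 * real N * real M) < 1"
proof -
  have "1 \<le> real N * real M"
    using assms(1,2) by (metis mult_le_mono of_nat_1 of_nat_le_iff of_nat_mult mult_1)
  then show "\<epsilon> < 2 * real N * real M" "0 < \<epsilon> / (2 * real N * real M)" "\<epsilon> / (2 * real N * real M) < 1"
    using assms(3,4) by (simp_all add: field_simps)
qed

lemma cantelli_level:
  assumes "0 < \<epsilon>" "\<epsilon> < n"
  shows "0 < sqrt ((n - \<epsilon>) / \<epsilon>)" "1 / (1 + (sqrt ((n - \<epsilon>) / \<epsilon>))\<^sup>2) = \<epsilon> / n"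
  using assms by (simp_all add: field_simps)

lemma gaussian_chance_constraints:
  fixes S :: "('x::finite, 'u::finite, 'm::finite, 'e::finite) dyn"
    and Gm :: "('x, 'n::finite, 'l::finite, 'm) geo"
    and Sig :: "real^('x + 'm \<times> 'e)^('x + 'm \<times> 'e)"
    and V :: "'w \<Rightarrow> nat \<Rightarrow> real^('x + 'm \<times> 'e)"
  assumes "N \<ge> 1" "J \<ge> 1" "psd Sig" "0 < \<epsilon>" "\<epsilon> < 1" "prob_space Pm"
    and gaussian: "stacked_gaussian Pm V t N Sig"
    and margins: "\<forall>k\<in>{t..<t+N}.
      (\<forall>i. dual_feas Gm lam nu i (Suc k) \<and>
         Yca S P Gm t lam nu i (Suc k) >
           std_normal_quantile (1 - \<epsilon> / (2 * real N * real CARD('m)))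
           * norm2_kron_sqrt Sig t N (Zca S P Gm t N lam i (Suc k))) \<and>
      (\<forall>j\<in>{1..J}. Yxu S P Fx Fu f t j k \<ge>
           std_normal_quantile (1 - \<epsilon> / (2 * real N * real J))
           * norm2_kron_sqrt Sig t N (Zxu S P Fx Fu t N j k))"
  shows "measure Pm {w \<in> space Pm. CA S P Gm t N lam nu (V w) \<and> XU S P Fx Fu f J t N (V w)} \<ge> 1 - \<epsilon>"
proof -
  have form: "centered_gaussian_rv Pm (\<lambda>w. \<Sum>l\<in>{t..<t+N}. z l \<bullet> V w l) (\<Sum>l\<in>{t..<t+N}. z l \<bullet> (Sig *v z l))"
    for z
    using gaussian unfolding stacked_gaussian_def by blast
  have tail: "measure Pm {w \<in> space Pm. std_normal_quantile (1 - \<delta>) * norm2_kron_sqrt Sig t N z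
      < (\<Sum>l\<in>{t..<t+N}. z l \<bullet> V w l)} \<le> \<delta>" if "0 < \<delta>" "\<delta> < 1" for \<delta> z
    using gaussian_tail[OF \<open>prob_space Pm\<close> form, of "1 - \<delta>"] that
    by (simp add: norm2_kron_sqrt_def norm_vector_matrix_psd_sqrt[OF \<open>psd Sig\<close>])
  show ?thesis
  proof (rule chance_constraints_union_bound[OF \<open>prob_space Pm\<close> assms(1,2) _ _ _ margins])
    show "(\<lambda>w. \<Sum>l\<in>{t..<t+N}. z l \<bullet> V w l) \<in> borel_measurable Pm" for z
      using centered_gaussian_rv_measurable[OF form] .
  qed (use tail risk_share_bounds assms(1,2,4,5) in auto)
qed

lemma moment_chance_constraints:
  fixes S :: "('x::finite, 'u::finite, 'm::finite, 'e::finite) dyn"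
    and Gm :: "('x, 'n::finite, 'l::finite, 'm) geo"
    and Sig :: "real^('x + 'm \<times> 'e)^('x + 'm \<times> 'e)"
    and V :: "'w \<Rightarrow> nat \<Rightarrow> real^('x + 'm \<times> 'e)"
  assumes "N \<ge> 1" "J \<ge> 1" "psd Sig" "0 < \<epsilon>" "\<epsilon> < 1" "prob_space Pm"
    and moments: "stacked_moments Pm V t N Sig"
    and margins: "\<forall>k\<in>{t..<t+N}.
      (\<forall>i. dual_feas Gm lam nu i (Suc k) \<and>
         Yca S P Gm t lam nu i (Suc k) >
           sqrt ((2 * real N * real CARD('m) - \<epsilon>) / \<epsilon>)
           * norm2_kron_sqrt Sig t N (Zca S P Gm t N lam i (Suc k))) \<and>
      (\<forall>j\<in>{1..J}. Yxu S P Fx Fu f t j k \<ge>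
           sqrt ((2 * real N * real J - \<epsilon>) / \<epsilon>)
           * norm2_kron_sqrt Sig t N (Zxu S P Fx Fu t N j k))"
  shows "measure Pm {w \<in> space Pm. CA S P Gm t N lam nu (V w) \<and> XU S P Fx Fu f J t N (V w)} \<ge> 1 - \<epsilon>"
proof -
  note form = stacked_moments_linear_form[OF moments]
  have tail: "measure Pm {w \<in> space Pm. sqrt ((n - \<epsilon>) / \<epsilon>) * norm2_kron_sqrt Sig t N z
      < (\<Sum>l\<in>{t..<t+N}. z l \<bullet> V w l)} \<le> \<epsilon> / n" if "\<epsilon> < n" for n z
    using cantelli_tail[OF \<open>prob_space Pm\<close> form, of "sqrt ((n - \<epsilon>) / \<epsilon>)" z] cantelli_level[OF \<open>0 < \<epsilon>\<close> that]
    by (simp add: norm2_kron_sqrt_def norm_vector_matrix_psd_sqrt[OF \<open>psd Sig\<close>])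
  show ?thesis
    using risk_share_bounds(1)[OF assms(1) _ assms(4,5)] assms(2)
    by (intro chance_constraints_union_bound[OF \<open>prob_space Pm\<close> assms(1,2) _ tail tail margins])
      (auto intro: borel_measurable_integrable form)
qed

theorem theorem1:
  fixes S :: "('x::finite, 'u::finite, 'm::finite, 'e::finite) dyn"
    and P :: "('x, 'u, 'm) policy"
    and Gm :: "('x, 'n::finite, 'l::finite, 'm) geo"
    and Fx :: "nat \<Rightarrow> real^'x" and Fu :: "nat \<Rightarrow> real^'u" and f :: "nat \<Rightarrow> real"
    and N J t :: nat
    and lam nu :: "'m \<Rightarrow> nat \<Rightarrow> real^'l"
  assumes N: "N \<ge> 1" and J: "J \<ge> 1"
    and cone: "closed (gK Gm)" "convex (gK Gm)" "cone (gK Gm)" "interior (gK Gm) \<noteq> {}"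
    and rot: "\<And>k. rotation_matrix (gR Gm k)" "\<And>i k. rotation_matrix (gRi Gm i k)"
  shows
  \<comment> \<open>1) robust reformulation under the polytopic noise set\<close>
  "(\<forall>(Gam :: real^('x + 'm \<times> 'e)^('x + 'm \<times> 'e)) (\<gamma>::real). invertible Gam \<and> \<gamma> > 0 \<longrightarrow>
     ((\<forall>V. (\<forall>l\<in>{t..<t+N}. infnorm (Gam *v V l) \<le> \<gamma>) \<longrightarrow>
            CA S P Gm t N lam nu V \<and> XU S P Fx Fu f J t N V)
      \<longleftrightarrow>
      (\<forall>k\<in>{t..<t+N}.
         (\<forall>i. dual_feas Gm lam nu i (Suc k) \<and>
              Yca S P Gm t lam nu i (Suc k) > \<gamma> * norm1_kron_inv Gam t N (Zca S P Gm t N lam i (Suc k))) \<and>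
         (\<forall>j\<in>{1..J}. Yxu S P Fx Fu f t j k - \<gamma> * norm1_kron_inv Gam t N (Zxu S P Fx Fu t N j k) \<ge> 0))))
   \<and>
  \<comment> \<open>2) Gaussian noise\<close>
   (\<forall>(Sig :: real^('x + 'm \<times> 'e)^('x + 'm \<times> 'e)) \<epsilon> (Pm :: 'w measure) V.
     psd Sig \<and> 0 < \<epsilon> \<and> \<epsilon> < 1 \<and> prob_space Pm \<and> stacked_gaussian Pm V t N Sig \<and>
     (\<forall>k\<in>{t..<t+N}.
         (\<forall>i. dual_feas Gm lam nu i (Suc k) \<and>
              Yca S P Gm t lam nu i (Suc k) >
                std_normal_quantile (1 - \<epsilon> / (2 * real N * real CARD('m)))
                * norm2_kron_sqrt Sig t N (Zca S P Gm t N lam i (Suc k))) \<and>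
         (\<forall>j\<in>{1..J}. Yxu S P Fx Fu f t j k \<ge>
                std_normal_quantile (1 - \<epsilon> / (2 * real N * real J))
                * norm2_kron_sqrt Sig t N (Zxu S P Fx Fu t N j k)))
     \<longrightarrow> measure Pm {w \<in> space Pm. CA S P Gm t N lam nu (V w) \<and> XU S P Fx Fu f J t N (V w)} \<ge> 1 - \<epsilon>)
   \<and>
  \<comment> \<open>3) distributionally robust: any noise with mean 0 and covariance I_N \<otimes> Sigma\<close>
   (\<forall>(Sig :: real^('x + 'm \<times> 'e)^('x + 'm \<times> 'e)) \<epsilon> (Pm :: 'v measure) V.
     psd Sig \<and> 0 < \<epsilon> \<and> \<epsilon> < 1 \<and> prob_space Pm \<and> stacked_moments Pm V t N Sig \<and>
     (\<forall>k\<in>{t..<t+N}.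
         (\<forall>i. dual_feas Gm lam nu i (Suc k) \<and>
              Yca S P Gm t lam nu i (Suc k) >
                sqrt ((2 * real N * real CARD('m) - \<epsilon>) / \<epsilon>)
                * norm2_kron_sqrt Sig t N (Zca S P Gm t N lam i (Suc k))) \<and>
         (\<forall>j\<in>{1..J}. Yxu S P Fx Fu f t j k \<ge>
                sqrt ((2 * real N * real J - \<epsilon>) / \<epsilon>)
                * norm2_kron_sqrt Sig t N (Zxu S P Fx Fu t N j k)))
     \<longrightarrow> measure Pm {w \<in> space Pm. CA S P Gm t N lam nu (V w) \<and> XU S P Fx Fu f J t N (V w)} \<ge> 1 - \<epsilon>)"
  by (intro conjI allI impI; elim conjE)
    (rule robust_reformulation gaussian_chance_constraints[OF N J] moment_chance_constraints[OF N J];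
      assumption)+

end
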